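(* Let $f(x)\in R_k[x;\Theta]$ be a monic irreducible divisor of $x^{np^s}-\lambda$ of degree $l$ such that $f(x)^j$ is central and divides $x^{np^s}-\lambda$ ($j\ge1$), and put $\mathcal R=R_k[x;\Theta]/\langle f(x)^j\rangle$. Then every left ideal $\mathcal I$ of $\mathcal R$ (equivalently every skew $(f^j,\Theta)$-polycyclic code of length $lj$ over $R_k$) is of the form \[ \mathcal I=\sum_{i=1}^{k}\mathcal R\Big(u^{i-1}a_i(x)+\sum_{t=1}^{k-i}u^{i-1+t}r_{i,t}(x)\Big), \] where: each $a_i(x)$ is $0$ or belongs to $\mathcal B$; $a_k(x)\mid_r a_i(x)$ for all $1\le i\le k-1$; each $r_{i,t}(x)$ is an element of $\mathbb{F}_{p^m}[x;\theta]/\langle \mu_k(f(x))^j\rangle$ (a polynomial over $\mathbb{F}_{p^m}$ of degree $<lj$); and for each $2\le i\le k$ with $a_i(x)\ne0$, $\max_{1\le t\le i-1}\deg r_{t,i-t}(x)<\deg a_i(x)$. Moreover, the polynomials $r_{i,t}(x)$ satisfying these conditions are unique.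
   Context: $p$ odd prime, $m,k,n,s\ge1$, $\gcd(n,p)=1$, $R_k=\mathbb{F}_{p^m}[u]/\langle u^k\rangle$. $\Theta\in\mathrm{Aut}(R_k)$ whose order divides $np^s$, $\theta=\Theta|_{\mathbb{F}_{p^m}}$; $R_k[x;\Theta]$ is the skew polynomial ring with $xa=\Theta(a)x$, and $\mathbb{F}_{p^m}[x;\theta]$ likewise. $\lambda\in R_k^*$ with $\Theta(\lambda)=\lambda$. $\mu_k:R_k\to\mathbb{F}_{p^m}$, $\sum_{i}a_iu^i\mapsto a_0$, extended coefficientwise to polynomials. $g\mid_r h$ means $h=qg$ for some polynomial $q$. $\mathcal B$ denotes the set of monic divisors of $\mu_k(f(x)^j)$ in $\mathbb{F}_{p^m}[x;\theta]$. *)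

theory Defs
  imports "HOL-Computational_Algebra.Polynomial" "HOL-Algebra.QuotRing"
begin

text \<open>Elements of R_k are represented by their reduced representatives: polynomials
  over the field F (type 'a) in the variable u of degree < k.\<close>

definition rk_mult :: "nat \<Rightarrow> 'a::field poly \<Rightarrow> 'a poly \<Rightarrow> 'a poly" where
  "rk_mult k a b = (a * b) mod ([:0, 1:] ^ k)"

definition Rk :: "nat \<Rightarrow> ('a::field poly) ring" where
  "Rk k = \<lparr>carrier = {a. degree a < k}, mult = rk_mult k, one = 1, zero = 0, add = (+)\<rparr>"

definition skew_mult :: "('b::comm_monoid_add \<Rightarrow> 'b \<Rightarrow> 'b) \<Rightarrow> ('b \<Rightarrow> 'b) \<Rightarrow> 'b poly \<Rightarrow> 'b poly \<Rightarrow> 'b poly" where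
  "skew_mult mul \<sigma> A B =
     (\<Sum>i\<le>degree A. \<Sum>j\<le>degree B. monom (mul (coeff A i) ((\<sigma> ^^ i) (coeff B j))) (i + j))"

definition skewRk :: "nat \<Rightarrow> ('a::field poly \<Rightarrow> 'a poly) \<Rightarrow> ('a poly poly) ring" where
  "skewRk k \<Theta> = \<lparr>carrier = {A. \<forall>i. coeff A i \<in> carrier (Rk k)},
                  mult = skew_mult (rk_mult k) \<Theta>, one = 1, zero = 0, add = (+)\<rparr>"

definition skewF :: "('a::field \<Rightarrow> 'a) \<Rightarrow> ('a poly) ring" where
  "skewF \<theta> = \<lparr>carrier = UNIV, mult = skew_mult (*) \<theta>, one = 1, zero = 0, add = (+)\<rparr>"

definition rdvd :: "('a, 'm) ring_scheme \<Rightarrow> 'a \<Rightarrow> 'a \<Rightarrow> bool" where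
  "rdvd R g h \<longleftrightarrow> (\<exists>q \<in> carrier R. h = q \<otimes>\<^bsub>R\<^esub> g)"

definition skew_irreducible :: "('a, 'm) ring_scheme \<Rightarrow> 'a \<Rightarrow> bool" where
  "skew_irreducible R f \<longleftrightarrow> f \<in> carrier R \<and> f \<notin> Units R \<and>
     (\<forall>g \<in> carrier R. \<forall>h \<in> carrier R. f = g \<otimes>\<^bsub>R\<^esub> h \<longrightarrow> g \<in> Units R \<or> h \<in> Units R)"

definition central :: "('a, 'm) ring_scheme \<Rightarrow> 'a \<Rightarrow> bool" where
  "central R a \<longleftrightarrow> a \<in> carrier R \<and> (\<forall>b \<in> carrier R. a \<otimes>\<^bsub>R\<^esub> b = b \<otimes>\<^bsub>R\<^esub> a)"

definition left_ideal :: "'a set \<Rightarrow> ('a, 'm) ring_scheme \<Rightarrow> bool" where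
  "left_ideal I R \<longleftrightarrow> additive_subgroup I R \<and> (\<forall>a \<in> carrier R. \<forall>x \<in> I. a \<otimes>\<^bsub>R\<^esub> x \<in> I)"

definition left_gen :: "('a, 'm) ring_scheme \<Rightarrow> (nat \<Rightarrow> 'a) \<Rightarrow> nat set \<Rightarrow> 'a set" where
  "left_gen R g A = {finsum R (\<lambda>i. c i \<otimes>\<^bsub>R\<^esub> g i) A | c. c \<in> A \<rightarrow> carrier R}"

definition mu :: "'a::field poly poly \<Rightarrow> 'a poly" where
  "mu A = map_poly (\<lambda>c. coeff c 0) A"

definition emb :: "'a::field poly \<Rightarrow> 'a poly poly" where
  "emb a = map_poly (\<lambda>c. [:c:]) a"

definition gen_poly :: "nat \<Rightarrow> ('a::field poly \<Rightarrow> 'a poly) \<Rightarrow> (nat \<Rightarrow> 'a poly)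
    \<Rightarrow> (nat \<Rightarrow> nat \<Rightarrow> 'a poly) \<Rightarrow> nat \<Rightarrow> 'a poly poly" where
  "gen_poly k \<Theta> a r i =
     [:[:0, 1:] ^ (i - 1):] \<otimes>\<^bsub>skewRk k \<Theta>\<^esub> emb (a i)
     + (\<Sum>t\<in>{1..k - i}. [:[:0, 1:] ^ (i - 1 + t):] \<otimes>\<^bsub>skewRk k \<Theta>\<^esub> emb (r i t))"

text \<open>The side conditions of the theorem on the families a_i, r_{i,t}
  (B = monic right divisors of \<mu>_k(f^j) in F[x;\<theta>]).\<close>
definition rep_conds :: "nat \<Rightarrow> ('a::field \<Rightarrow> 'a) \<Rightarrow> 'a poly poly \<Rightarrow> nat \<Rightarrow> nat
    \<Rightarrow> (nat \<Rightarrow> 'a poly) \<Rightarrow> (nat \<Rightarrow> nat \<Rightarrow> 'a poly) \<Rightarrow> bool" where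
  "rep_conds k \<theta> Fj l j a r \<longleftrightarrow>
     (\<forall>i\<in>{1..k}. a i = 0 \<or> (lead_coeff (a i) = 1 \<and> rdvd (skewF \<theta>) (a i) (mu Fj))) \<and>
     (\<forall>i\<in>{1..k - 1}. rdvd (skewF \<theta>) (a k) (a i)) \<and>
     (\<forall>i\<in>{1..k}. \<forall>t\<in>{1..k - i}. degree (r i t) < l * j) \<and>
     (\<forall>i\<in>{2..k}. a i \<noteq> 0 \<longrightarrow>
        (\<forall>t\<in>{1..i - 1}. r t (i - t) = 0 \<or> degree (r t (i - t)) < degree (a i)))"

end

theory Submission
  imports Defs
begin

text \<open>
  Let I' be the preimage of I in R_k[x;\<Theta>]. For w < k, the residues z in F[x;\<theta>] such that
  u^w z lies in I' modulo u^(w+1) form a left ideal Tor_w of F[x;\<theta>]: a left factor p can be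
  moved past u^w, because an automorphism of R_k and its inverse both preserve divisibility by u^w.
  These ideals increase with w and contain \<mu>(f^j), so Tor_(i-1) is generated by a monic right
  divisor a_i of \<mu>(f^j), and a_k right-divides every a_i. Lifting u^(i-1) a_i to I' and reducing
  its higher u-adic coefficients one at a time, by right division by a_(i+1), ..., a_k, yields
  generators whose tails r_(i,t) have degree below deg a_(i+t). Cancelling lowest u-adic terms
  shows that they span I'. The difference of two such generators lies in I' and its lowest term
  is a residue in Tor of degree too small to be a multiple of the corresponding a, so the tails
  are unique.
\<close>

section \<open>Skew polynomials over a ring given by carrier and multiplication\<close>

abbreviation ring_of :: "'b::{zero, one, plus} set \<Rightarrow> ('b \<Rightarrow> 'b \<Rightarrow> 'b) \<Rightarrow> 'b ring" where
  "ring_of C mul \<equiv> \<lparr>carrier = C, mult = mul, one = 1, zero = 0, add = (+)\<rparr>"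

locale skew_poly =
  fixes C :: "'b::comm_ring_1 set" and mul :: "'b \<Rightarrow> 'b \<Rightarrow> 'b" and \<sigma> :: "'b \<Rightarrow> 'b"
  assumes ring_coeffs: "ring (ring_of C mul)"
    and hom_\<sigma>: "\<sigma> \<in> ring_hom (ring_of C mul) (ring_of C mul)"
begin

sublocale R: ring "ring_of C mul" by (rule ring_coeffs)

lemma zero_closed: "0 \<in> C" using R.zero_closed by simp
lemma one_closed: "1 \<in> C" using R.one_closed by simp
lemma add_closed: "x \<in> C \<Longrightarrow> y \<in> C \<Longrightarrow> x + y \<in> C" using R.a_closed by simp
lemma mul_closed: "x \<in> C \<Longrightarrow> y \<in> C \<Longrightarrow> mul x y \<in> C" using R.m_closed by simp
lemma mul_assoc: "x \<in> C \<Longrightarrow> y \<in> C \<Longrightarrow> z \<in> C \<Longrightarrow> mul (mul x y) z = mul x (mul y z)"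
  using R.m_assoc by simp
lemma l_distr: "x \<in> C \<Longrightarrow> y \<in> C \<Longrightarrow> z \<in> C \<Longrightarrow> mul (x + y) z = mul x z + mul y z"
  using R.l_distr by simp
lemma r_distr: "x \<in> C \<Longrightarrow> y \<in> C \<Longrightarrow> z \<in> C \<Longrightarrow> mul z (x + y) = mul z x + mul z y"
  using R.r_distr by simp
lemma l_one: "x \<in> C \<Longrightarrow> mul 1 x = x" using R.l_one by simp
lemma r_one: "x \<in> C \<Longrightarrow> mul x 1 = x" using R.r_one by simp
lemma l_null: "x \<in> C \<Longrightarrow> mul 0 x = 0" using R.l_null by simp
lemma r_null: "x \<in> C \<Longrightarrow> mul x 0 = 0" using R.r_null by simp

lemma uminus_closed:
  assumes "x \<in> C" shows "- x \<in> C"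
proof -
  obtain y where "y \<in> C" "y + x = 0" using R.add.l_inv_ex[of x] assms by auto
  then have "y = - x" by (simp add: eq_neg_iff_add_eq_0 add.commute)
  then show ?thesis using \<open>y \<in> C\<close> by simp
qed

lemma diff_closed: "x \<in> C \<Longrightarrow> y \<in> C \<Longrightarrow> x - y \<in> C"
  using add_closed uminus_closed by (metis diff_conv_add_uminus)

lemma sum_closed: "(\<And>i. i \<in> S \<Longrightarrow> f i \<in> C) \<Longrightarrow> (\<Sum>i\<in>S. f i) \<in> C"
  by (induction S rule: infinite_finite_induct) (auto simp: zero_closed add_closed)

lemma sum_mul: "(\<And>i. i \<in> S \<Longrightarrow> f i \<in> C) \<Longrightarrow> y \<in> C \<Longrightarrow> mul (\<Sum>i\<in>S. f i) y = (\<Sum>i\<in>S. mul (f i) y)"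
  by (induction S rule: infinite_finite_induct) (auto simp: l_null l_distr sum_closed)

lemma mul_sum: "(\<And>i. i \<in> S \<Longrightarrow> f i \<in> C) \<Longrightarrow> y \<in> C \<Longrightarrow> mul y (\<Sum>i\<in>S. f i) = (\<Sum>i\<in>S. mul y (f i))"
  by (induction S rule: infinite_finite_induct) (auto simp: r_null r_distr sum_closed)

lemma hom_\<sigma>_pow: "\<sigma> ^^ i \<in> ring_hom (ring_of C mul) (ring_of C mul)"
proof (induction i)
  case 0
  show ?case using id_ring_hom by (simp add: id_def)
next
  case (Suc i)
  then show ?case using ring_hom_trans[OF Suc hom_\<sigma>] by (simp add: o_def)
qed

lemma \<sigma>_pow_closed: "x \<in> C \<Longrightarrow> (\<sigma> ^^ i) x \<in> C"
  using ring_hom_closed[OF hom_\<sigma>_pow] by simp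
lemma \<sigma>_pow_add: "x \<in> C \<Longrightarrow> y \<in> C \<Longrightarrow> (\<sigma> ^^ i) (x + y) = (\<sigma> ^^ i) x + (\<sigma> ^^ i) y"
  using ring_hom_add[OF hom_\<sigma>_pow] by simp
lemma \<sigma>_pow_mul: "x \<in> C \<Longrightarrow> y \<in> C \<Longrightarrow> (\<sigma> ^^ i) (mul x y) = mul ((\<sigma> ^^ i) x) ((\<sigma> ^^ i) y)"
  using ring_hom_mult[OF hom_\<sigma>_pow] by simp
lemma \<sigma>_pow_one: "(\<sigma> ^^ i) 1 = 1"
  using ring_hom_one[OF hom_\<sigma>_pow] by simp
lemma \<sigma>_pow_zero: "(\<sigma> ^^ i) 0 = 0"
  using ring_hom_zero[OF hom_\<sigma>_pow R.ring_axioms R.ring_axioms] by simp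

lemma \<sigma>_pow_sum: "(\<And>i. i \<in> S \<Longrightarrow> f i \<in> C) \<Longrightarrow> (\<sigma> ^^ n) (\<Sum>i\<in>S. f i) = (\<Sum>i\<in>S. (\<sigma> ^^ n) (f i))"
  by (induction S rule: infinite_finite_induct) (auto simp: \<sigma>_pow_zero \<sigma>_pow_add sum_closed)

definition polys :: "'b poly set" where "polys = {A. \<forall>i. coeff A i \<in> C}"

lemma polys_coeff: "A \<in> polys \<Longrightarrow> coeff A i \<in> C" by (simp add: polys_def)
lemma polys_add: "A \<in> polys \<Longrightarrow> B \<in> polys \<Longrightarrow> A + B \<in> polys" by (simp add: polys_def add_closed)
lemma polys_uminus: "A \<in> polys \<Longrightarrow> - A \<in> polys" by (simp add: polys_def uminus_closed)
lemma polys_diff: "A \<in> polys \<Longrightarrow> B \<in> polys \<Longrightarrow> A - B \<in> polys" by (simp add: polys_def diff_closed)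
lemma polys_zero: "0 \<in> polys" by (simp add: polys_def zero_closed)
lemma polys_one: "1 \<in> polys" by (simp add: polys_def zero_closed one_closed coeff_1)
lemma polys_monom: "c \<in> C \<Longrightarrow> monom c d \<in> polys" by (simp add: polys_def coeff_monom zero_closed)
lemma polys_const: "c \<in> C \<Longrightarrow> [:c:] \<in> polys" using polys_monom[of c 0] by (simp add: monom_0)

lemma coeff_skew_mult:
  assumes A: "A \<in> polys" and B: "B \<in> polys"
  shows "coeff (skew_mult mul \<sigma> A B) n = (\<Sum>i\<le>n. mul (coeff A i) ((\<sigma> ^^ i) (coeff B (n - i))))"
proof -
  define g where "g i j = mul (coeff A i) ((\<sigma> ^^ i) (coeff B j))" for i j
  have g0: "g i j = 0" if "i > degree A \<or> j > degree B" for i j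
    using that A B by (auto simp: g_def coeff_eq_0 \<sigma>_pow_zero l_null r_null \<sigma>_pow_closed polys_coeff)
  have "coeff (skew_mult mul \<sigma> A B) n = (\<Sum>i\<le>degree A. \<Sum>j\<le>degree B. if i + j = n then g i j else 0)"
    unfolding g_def by (simp add: skew_mult_def coeff_sum coeff_monom eq_commute)
  also have "\<dots> = (\<Sum>i\<le>degree A. if i \<le> n then g i (n - i) else 0)"
  proof (rule sum.cong[OF refl])
    fix i
    have "(\<Sum>j\<le>degree B. if i + j = n then g i j else 0) = (\<Sum>j\<le>degree B. if j = n - i \<and> i \<le> n then g i j else 0)"
      by (intro sum.cong) auto
    also have "\<dots> = (if i \<le> n then g i (n - i) else 0)"
      using g0[of i "n - i"] by (auto simp: sum.delta')
    finally show "(\<Sum>j\<le>degree B. if i + j = n then g i j else 0) = (if i \<le> n then g i (n - i) else 0)" .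
  qed
  also have "\<dots> = (\<Sum>i\<le>max n (degree A). if i \<le> n then g i (n - i) else 0)"
    by (rule sum.mono_neutral_left) (auto simp: g0)
  also have "\<dots> = (\<Sum>i\<le>n. g i (n - i))"
    by (rule sum.mono_neutral_cong_right) auto
  finally show ?thesis by (simp add: g_def)
qed

lemma skew_mult_closed: "A \<in> polys \<Longrightarrow> B \<in> polys \<Longrightarrow> skew_mult mul \<sigma> A B \<in> polys"
  by (subst polys_def) (auto simp: coeff_skew_mult intro!: sum_closed mul_closed \<sigma>_pow_closed polys_coeff)

lemma skew_mult_assoc:
  assumes A: "A \<in> polys" and B: "B \<in> polys" and D: "D \<in> polys"
  shows "skew_mult mul \<sigma> (skew_mult mul \<sigma> A B) D = skew_mult mul \<sigma> A (skew_mult mul \<sigma> B D)"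
proof (rule poly_eqI)
  fix n
  let ?a = "coeff A" and ?b = "coeff B" and ?d = "coeff D"
  define h where "h i j = mul (mul (?a i) ((\<sigma> ^^ i) (?b j))) ((\<sigma> ^^ (i + j)) (?d (n - i - j)))" for i j
  have coeffs: "?a i \<in> C" "?b i \<in> C" "?d i \<in> C" for i using A B D by (auto simp: polys_coeff)
  have "coeff (skew_mult mul \<sigma> (skew_mult mul \<sigma> A B) D) n
      = (\<Sum>m\<le>n. mul (\<Sum>i\<le>m. mul (?a i) ((\<sigma> ^^ i) (?b (m - i)))) ((\<sigma> ^^ m) (?d (n - m))))"
    using A B D by (simp add: coeff_skew_mult skew_mult_closed)
  also have "\<dots> = (\<Sum>m\<le>n. \<Sum>i\<le>m. h i (m - i))"
    by (intro sum.cong refl, subst sum_mul) (auto simp: h_def coeffs mul_closed \<sigma>_pow_closed)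
  also have "\<dots> = (\<Sum>(i, j)\<in>{(i, j). i + j \<le> n}. h i j)"
    by (rule sum.triangle_reindex_eq[symmetric])
  also have "\<dots> = (\<Sum>i\<le>n. \<Sum>j\<le>n - i. h i j)"
  proof -
    have "{(i, j). i + j \<le> n} = Sigma {..n} (\<lambda>i. {..n - i})" by auto
    then show ?thesis by (simp add: sum.Sigma)
  qed
  also have "\<dots> = (\<Sum>i\<le>n. mul (?a i) ((\<sigma> ^^ i) (\<Sum>j\<le>n - i. mul (?b j) ((\<sigma> ^^ j) (?d (n - i - j))))))"
    by (intro sum.cong refl)
      (simp add: \<sigma>_pow_sum mul_sum \<sigma>_pow_mul mul_assoc mul_closed \<sigma>_pow_closed coeffs h_def funpow_add)
  also have "\<dots> = coeff (skew_mult mul \<sigma> A (skew_mult mul \<sigma> B D)) n"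
    using A B D by (simp add: coeff_skew_mult skew_mult_closed)
  finally show "coeff (skew_mult mul \<sigma> (skew_mult mul \<sigma> A B) D) n
      = coeff (skew_mult mul \<sigma> A (skew_mult mul \<sigma> B D)) n" .
qed

lemma skew_mult_one_left: "A \<in> polys \<Longrightarrow> skew_mult mul \<sigma> 1 A = A"
proof (rule poly_eqI)
  fix n assume A: "A \<in> polys"
  have "mul (coeff 1 i) ((\<sigma> ^^ i) (coeff A (n - i))) = (if i = 0 then coeff A n else 0)" for i
    using A by (auto simp: coeff_1 l_null l_one \<sigma>_pow_closed polys_coeff)
  then show "coeff (skew_mult mul \<sigma> 1 A) n = coeff A n"
    using A polys_one by (simp add: coeff_skew_mult sum.delta)
qed

lemma skew_mult_one_right: "A \<in> polys \<Longrightarrow> skew_mult mul \<sigma> A 1 = A"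
proof (rule poly_eqI)
  fix n assume A: "A \<in> polys"
  have "mul (coeff A i) ((\<sigma> ^^ i) (coeff 1 (n - i))) = (if i = n then coeff A n else 0)" if "i \<le> n" for i
    using A that by (auto simp: coeff_1 r_null r_one \<sigma>_pow_zero \<sigma>_pow_one polys_coeff)
  then show "coeff (skew_mult mul \<sigma> A 1) n = coeff A n"
    using A polys_one by (simp add: coeff_skew_mult sum.delta')
qed

lemma skew_mult_distrib_left: "A \<in> polys \<Longrightarrow> B \<in> polys \<Longrightarrow> D \<in> polys \<Longrightarrow>
    skew_mult mul \<sigma> (A + B) D = skew_mult mul \<sigma> A D + skew_mult mul \<sigma> B D"
  by (rule poly_eqI)
    (simp add: coeff_skew_mult polys_add polys_coeff l_distr \<sigma>_pow_closed sum.distrib[symmetric])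

lemma skew_mult_distrib_right: "A \<in> polys \<Longrightarrow> B \<in> polys \<Longrightarrow> D \<in> polys \<Longrightarrow>
    skew_mult mul \<sigma> D (A + B) = skew_mult mul \<sigma> D A + skew_mult mul \<sigma> D B"
  by (rule poly_eqI)
    (simp add: coeff_skew_mult polys_add polys_coeff r_distr \<sigma>_pow_closed \<sigma>_pow_add sum.distrib[symmetric])

lemma ring_skew: "ring (ring_of polys (skew_mult mul \<sigma>))"
proof (rule ringI)
  show "abelian_group (ring_of polys (skew_mult mul \<sigma>))"
    by (rule abelian_groupI) (auto simp: polys_add polys_zero intro!: bexI[of _ "- _"] polys_uminus)
  show "monoid (ring_of polys (skew_mult mul \<sigma>))"
    by (rule monoidI)
      (auto simp: skew_mult_closed polys_one skew_mult_assoc skew_mult_one_left skew_mult_one_right)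
qed (auto simp: skew_mult_distrib_left skew_mult_distrib_right)

lemma skew_mult_zero_left: "A \<in> polys \<Longrightarrow> skew_mult mul \<sigma> 0 A = 0"
  using skew_mult_distrib_left[of 0 0 A] polys_zero by simp

lemma skew_mult_zero_right: "A \<in> polys \<Longrightarrow> skew_mult mul \<sigma> A 0 = 0"
  using skew_mult_distrib_right[of 0 0 A] polys_zero by simp

lemma skew_mult_diff_right: "A \<in> polys \<Longrightarrow> B \<in> polys \<Longrightarrow> D \<in> polys \<Longrightarrow>
    skew_mult mul \<sigma> D (A - B) = skew_mult mul \<sigma> D A - skew_mult mul \<sigma> D B"
  using skew_mult_distrib_right[of "A - B" B D] by (simp add: polys_diff)

lemma coeff_skew_mult_above:
  assumes A: "A \<in> polys" and B: "B \<in> polys" and n: "n > degree A + degree B"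
  shows "coeff (skew_mult mul \<sigma> A B) n = 0"
proof -
  have "mul (coeff A i) ((\<sigma> ^^ i) (coeff B (n - i))) = 0" for i
  proof (cases "i > degree A")
    case True
    then show ?thesis using B by (simp add: coeff_eq_0 l_null \<sigma>_pow_closed polys_coeff)
  next
    case False
    then have "n - i > degree B" using n by auto
    then show ?thesis using A by (simp add: coeff_eq_0 r_null \<sigma>_pow_zero polys_coeff)
  qed
  then show ?thesis using A B by (simp add: coeff_skew_mult)
qed

lemma coeff_skew_mult_top:
  assumes A: "A \<in> polys" and B: "B \<in> polys"
  shows "coeff (skew_mult mul \<sigma> A B) (degree A + degree B) =
    mul (lead_coeff A) ((\<sigma> ^^ degree A) (lead_coeff B))"
proof -
  let ?n = "degree A + degree B"
  have "mul (coeff A i) ((\<sigma> ^^ i) (coeff B (?n - i))) =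
      (if i = degree A then mul (lead_coeff A) ((\<sigma> ^^ degree A) (lead_coeff B)) else 0)" for i
  proof (cases "i > degree A")
    case True
    then show ?thesis using B by (simp add: coeff_eq_0 l_null \<sigma>_pow_closed polys_coeff)
  next
    case False
    then show ?thesis
      using A by (cases "i = degree A") (simp_all add: coeff_eq_0 r_null \<sigma>_pow_zero polys_coeff)
  qed
  then show ?thesis using A B by (simp add: coeff_skew_mult sum.delta')
qed

lemma degree_skew_mult_le:
  "A \<in> polys \<Longrightarrow> B \<in> polys \<Longrightarrow> degree (skew_mult mul \<sigma> A B) \<le> degree A + degree B"
  by (rule degree_le) (auto intro: coeff_skew_mult_above)

lemma degree_skew_mult:
  assumes A: "A \<in> polys" and B: "B \<in> polys"
    and nz: "mul (lead_coeff A) ((\<sigma> ^^ degree A) (lead_coeff B)) \<noteq> 0"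
  shows "degree (skew_mult mul \<sigma> A B) = degree A + degree B"
    and "lead_coeff (skew_mult mul \<sigma> A B) = mul (lead_coeff A) ((\<sigma> ^^ degree A) (lead_coeff B))"
proof -
  show d: "degree (skew_mult mul \<sigma> A B) = degree A + degree B"
    using degree_skew_mult_le[OF A B] coeff_skew_mult_top[OF A B] nz
    by (metis le_antisym le_degree)
  then show "lead_coeff (skew_mult mul \<sigma> A B) = mul (lead_coeff A) ((\<sigma> ^^ degree A) (lead_coeff B))"
    using coeff_skew_mult_top[OF A B] by simp
qed

lemma coeff_skew_mult_monom_left:
  assumes c: "c \<in> C" and B: "B \<in> polys"
  shows "coeff (skew_mult mul \<sigma> (monom c d) B) n =
    (if d \<le> n then mul c ((\<sigma> ^^ d) (coeff B (n - d))) else 0)"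
proof -
  have "mul (coeff (monom c d) i) ((\<sigma> ^^ i) (coeff B (n - i))) =
      (if i = d then mul c ((\<sigma> ^^ d) (coeff B (n - d))) else 0)" for i
    using B by (auto simp: l_null \<sigma>_pow_closed polys_coeff coeff_monom)
  then show ?thesis using B polys_monom[OF c] by (simp add: coeff_skew_mult sum.delta)
qed

lemma coeff_skew_mult_const_left:
  "c \<in> C \<Longrightarrow> B \<in> polys \<Longrightarrow> coeff (skew_mult mul \<sigma> [:c:] B) n = mul c (coeff B n)"
  using coeff_skew_mult_monom_left[of c B 0 n] by (simp add: monom_0)

lemma coeff_skew_mult_const_right:
  assumes c: "c \<in> C" and B: "B \<in> polys"
  shows "coeff (skew_mult mul \<sigma> B [:c:]) n = mul (coeff B n) ((\<sigma> ^^ n) c)"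
proof -
  have "mul (coeff B i) ((\<sigma> ^^ i) (coeff [:c:] (n - i))) =
      (if i = n then mul (coeff B n) ((\<sigma> ^^ n) c) else 0)" if "i \<le> n" for i
    using B that by (auto simp: r_null \<sigma>_pow_zero polys_coeff coeff_pCons split: nat.split)
  then show ?thesis using B polys_const[OF c] by (simp add: coeff_skew_mult sum.delta')
qed

end

lemma ring_of_comm_ring: "ring (ring_of (UNIV :: 'a::comm_ring_1 set) (*))"
proof (rule ringI)
  show "abelian_group (ring_of (UNIV :: 'a set) (*))"
    by (rule abelian_groupI) (auto intro: exI[of _ "- _"])
  show "monoid (ring_of (UNIV :: 'a set) (*))"
    by (rule monoidI) (auto simp: algebra_simps)
qed (auto simp: algebra_simps)

lemma zero_or_degree_less_diff:
  fixes x y :: "'a::ab_group_add poly"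
  assumes "x = 0 \<or> degree x < D" "y = 0 \<or> degree y < D"
  shows "x - y = 0 \<or> degree (x - y) < D"
  using assms degree_diff_le_max[of x y] by (cases "D = 0") auto

locale skew_field_poly = skew_poly "UNIV :: 'a::field set" "(*)" \<theta> for \<theta>
begin

abbreviation skew_times_F :: "'a poly \<Rightarrow> 'a poly \<Rightarrow> 'a poly" (infixl "\<diamond>" 70) where
  "p \<diamond> q \<equiv> skew_mult (*) \<theta> p q"

lemma polys_UNIV [simp]: "polys = UNIV" by (simp add: polys_def)

lemma skew_mult_const_left: "[:c:] \<diamond> z = smult c z"
  by (rule poly_eqI) (simp add: coeff_skew_mult_const_left)

lemma degree_skew_mult_monic:
  "lead_coeff a = 1 \<Longrightarrow> q \<noteq> 0 \<Longrightarrow> degree (q \<diamond> a) = degree q + degree a"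
  using degree_skew_mult(1)[of q a] by (simp add: \<sigma>_pow_one)

lemma skew_right_division:
  assumes a: "lead_coeff a = 1"
  shows "\<exists>q r. b = q \<diamond> a + r \<and> (r = 0 \<or> degree r < degree a)"
proof (induction "degree b" arbitrary: b rule: less_induct)
  case less
  show ?case
  proof (cases "b = 0 \<or> degree b < degree a")
    case True
    then show ?thesis by (intro exI[of _ 0] exI[of _ b]) (auto simp: skew_mult_zero_left)
  next
    case False
    then have ge: "degree a \<le> degree b" by auto
    define q0 where "q0 = monom (lead_coeff b) (degree b - degree a)"
    define b' where "b' = b - q0 \<diamond> a"
    have "coeff b' n = 0" if "n \<ge> degree b" for n
      using that ge a by (cases "n = degree b")
        (simp_all add: b'_def q0_def coeff_skew_mult_monom_left \<sigma>_pow_one \<sigma>_pow_zero coeff_eq_0)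
    then have "degree b' < degree b \<or> b' = 0"
      by (metis leading_coeff_0_iff not_le)
    then show ?thesis
    proof
      assume "degree b' < degree b"
      then obtain q r where qr: "b' = q \<diamond> a + r" "r = 0 \<or> degree r < degree a" using less by blast
      have "b = (q + q0) \<diamond> a + r" using qr(1) by (simp add: skew_mult_distrib_left b'_def algebra_simps)
      then show ?thesis using qr(2) by blast
    next
      assume "b' = 0"
      then show ?thesis by (intro exI[of _ q0] exI[of _ 0]) (simp add: b'_def)
    qed
  qed
qed

lemma left_ideal_monic_generator:
  assumes diff: "\<And>x y. x \<in> T \<Longrightarrow> y \<in> T \<Longrightarrow> x - y \<in> T"
    and lmult: "\<And>p x. x \<in> T \<Longrightarrow> p \<diamond> x \<in> T"
    and nonzero: "M \<in> T" "M \<noteq> 0"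
  shows "\<exists>a. lead_coeff a = 1 \<and> a \<in> T \<and> (\<forall>b\<in>T. \<exists>q. b = q \<diamond> a)"
proof -
  define d0 where "d0 = (LEAST d. \<exists>x\<in>T. x \<noteq> 0 \<and> degree x = d)"
  have "\<exists>x\<in>T. x \<noteq> 0 \<and> degree x = d0"
    unfolding d0_def by (rule LeastI_ex) (use nonzero in blast)
  then obtain x0 where x0: "x0 \<in> T" "x0 \<noteq> 0" "degree x0 = d0" by blast
  have least: "d0 \<le> degree x" if "x \<in> T" "x \<noteq> 0" for x
    unfolding d0_def using that by (intro Least_le) blast
  define a where "a = [:inverse (lead_coeff x0):] \<diamond> x0"
  have aT: "a \<in> T" using lmult x0 by (simp add: a_def)
  have a_eq: "a = smult (inverse (lead_coeff x0)) x0" by (simp add: a_def skew_mult_const_left)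
  have la: "lead_coeff a = 1" and da: "degree a = d0" using x0 by (auto simp: a_eq)
  have "\<exists>q. b = q \<diamond> a" if b: "b \<in> T" for b
  proof -
    obtain q r where qr: "b = q \<diamond> a + r" "r = 0 \<or> degree r < degree a"
      using skew_right_division[OF la] by blast
    have "r = b - q \<diamond> a" using qr(1) by simp
    then have "r \<in> T" using diff[OF b lmult[OF aT]] by simp
    then have "r = 0" using qr(2) least da by force
    then show ?thesis using qr by auto
  qed
  then show ?thesis using la aT by blast
qed

end

section \<open>Left ideals and quotient maps\<close>

lemma (in ring) left_ideal_finsum_closed:
  assumes I: "left_ideal I R" and f: "f \<in> A \<rightarrow> I"
  shows "finsum R f A \<in> I"
proof -
  have sub: "additive_subgroup I R" using I by (simp add: left_ideal_def)
  have fR: "f \<in> A \<rightarrow> carrier R" using f additive_subgroup.a_subset[OF sub] by blast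
  show ?thesis using f fR
  proof (induction A rule: infinite_finite_induct)
    case (insert a A)
    then show ?case using finsum_insert[of A a f] additive_subgroup.a_closed[OF sub] by auto
  qed (auto simp: finsum_infinite additive_subgroup.zero_closed[OF sub])
qed

lemma (in ring) left_gen_subset:
  assumes I: "left_ideal I R" and g: "g \<in> A \<rightarrow> I"
  shows "left_gen R g A \<subseteq> I"
  using assms by (auto simp: left_gen_def left_ideal_def intro!: left_ideal_finsum_closed)

lemma (in ring) left_gen_generator:
  assumes "finite A" and g: "g \<in> A \<rightarrow> carrier R" and i: "i \<in> A"
  shows "g i \<in> left_gen R g A"
proof -
  define c where "c j = (if j = i then \<one> else \<zero>)" for j
  have "finsum R (\<lambda>j. c j \<otimes> g j) A = finsum R (\<lambda>j. if j = i then g j else \<zero>) A"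
    using g by (intro finsum_cong') (auto simp: c_def Pi_def)
  also have "\<dots> = g i" using add.finprod_singleton_swap[OF i assms(1) g] by simp
  finally show ?thesis unfolding left_gen_def by (intro CollectI exI[of _ c]) (auto simp: c_def)
qed

lemma (in ring_hom_ring) left_ideal_vimage:
  assumes I: "left_ideal I S"
  shows "left_ideal {x \<in> carrier R. h x \<in> I} R"
proof -
  have sub: "additive_subgroup I S" and lmult: "\<And>a x. a \<in> carrier S \<Longrightarrow> x \<in> I \<Longrightarrow> a \<otimes>\<^bsub>S\<^esub> x \<in> I"
    using I by (auto simp: left_ideal_def)
  have "subgroup {x \<in> carrier R. h x \<in> I} (add_monoid R)"
    by (rule R.add.subgroupI)
      (auto simp: additive_subgroup.zero_closed[OF sub] additive_subgroup.a_closed[OF sub]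
        additive_subgroup.a_inv_closed[OF sub])
  then show ?thesis
    by (auto simp: left_ideal_def additive_subgroup_def lmult)
qed

lemma (in ring_hom_ring) hom_finsum_ring:
  "f \<in> A \<rightarrow> carrier R \<Longrightarrow> h (finsum R f A) = finsum S (h \<circ> f) A"
  by (induction A rule: infinite_finite_induct) (auto simp: Pi_def)

lemma (in ring_hom_ring) left_ideal_eq_left_gen:
  assumes surj: "h ` carrier R = carrier S" and I: "left_ideal I S" and A: "finite A"
    and G: "\<And>i. i \<in> A \<Longrightarrow> G i \<in> carrier R \<and> h (G i) \<in> I"
    and span: "\<And>X. X \<in> carrier R \<Longrightarrow> h X \<in> I \<Longrightarrow>
      \<exists>c \<in> A \<rightarrow> carrier R. X = finsum R (\<lambda>i. c i \<otimes> G i) A"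
  shows "I = left_gen S (\<lambda>i. h (G i)) A"
proof
  show "left_gen S (\<lambda>i. h (G i)) A \<subseteq> I" using G by (intro S.left_gen_subset I) auto
  show "I \<subseteq> left_gen S (\<lambda>i. h (G i)) A"
  proof
    fix y assume y: "y \<in> I"
    then have "y \<in> carrier S" using I additive_subgroup.a_subset by (auto simp: left_ideal_def)
    then obtain X where X: "X \<in> carrier R" "y = h X" using surj by blast
    then obtain c where c: "c \<in> A \<rightarrow> carrier R" "X = finsum R (\<lambda>i. c i \<otimes> G i) A"
      using span y by blast
    then have "y = finsum S (\<lambda>i. h (c i) \<otimes>\<^bsub>S\<^esub> h (G i)) A"
      using X G by (auto simp: hom_finsum_ring Pi_def intro!: S.finsum_cong')
    then show "y \<in> left_gen S (\<lambda>i. h (G i)) A"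
      using c unfolding left_gen_def by (intro CollectI exI[of _ "h \<circ> c"]) (auto simp: Pi_def)
  qed
qed

section \<open>The chain ring R_k\<close>

lemma Rk_carrier: "carrier (Rk k) = {a. degree a < k}" by (simp add: Rk_def)
lemma Rk_ops [simp]:
  "mult (Rk k) = rk_mult k" "add (Rk k) = (+)" "one (Rk k) = 1" "zero (Rk k) = 0"
  by (simp_all add: Rk_def)

lemma degree_upow [simp]: "degree ([:0, 1:] ^ w :: 'a::field poly) = w"
  using degree_linear_power[of 0 w] by simp

lemma upow_dvd_iff: "([:0, 1:] ^ w :: 'a::field poly) dvd p \<longleftrightarrow> (\<forall>i<w. coeff p i = 0)"
  using monom_1_dvd_iff'[of w p] by (simp add: monom_altdef)

lemma mod_upow_eq_self: "degree (a :: 'a::field poly) < k \<Longrightarrow> a mod [:0, 1:] ^ k = a"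
  by (rule mod_poly_less) simp

lemma rk_mult_closed: "k \<ge> 1 \<Longrightarrow> degree (rk_mult k (a :: 'a::field poly) b) < k"
  using degree_mod_less[of "[:0, 1:] ^ k" "a * b"] by (auto simp: rk_mult_def)

lemma rk_mult_assoc: "rk_mult k (rk_mult k a b) c = rk_mult k a (rk_mult k b c)"
  by (simp add: rk_mult_def mod_mult_left_eq mod_mult_right_eq mult.assoc)

lemma rk_mult_one: "degree a < k \<Longrightarrow> rk_mult k 1 a = a"
  by (simp add: rk_mult_def mod_upow_eq_self)

lemma rk_mult_comm: "rk_mult k a b = rk_mult k b a"
  by (simp add: rk_mult_def mult.commute)

lemma cring_Rk: assumes "k \<ge> 1" shows "cring (Rk k)"
proof (rule cringI)
  show "abelian_group (Rk k)"
    by (rule abelian_groupI)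
      (use assms in \<open>auto simp: Rk_carrier degree_add_less intro!: exI[of _ "- _"]\<close>)
  show "comm_monoid (Rk k)"
  proof (rule comm_monoidI)
    show "x \<otimes>\<^bsub>Rk k\<^esub> y = y \<otimes>\<^bsub>Rk k\<^esub> x" for x y by (simp only: Rk_ops(1) rk_mult_comm)
  qed (use assms in \<open>auto simp: Rk_carrier rk_mult_closed rk_mult_assoc rk_mult_one\<close>)
qed (simp add: rk_mult_def distrib_right poly_mod_add_left)

lemma ring_Rk: "k \<ge> 1 \<Longrightarrow> ring (Rk k)"
  using cring_Rk cring.axioms(1) by blast

lemma coeff_0_rk_mult: "k \<ge> 1 \<Longrightarrow> coeff (rk_mult k a b) 0 = coeff a 0 * coeff b 0"
proof -
  assume k: "k \<ge> 1"
  have "coeff ([:0, 1:] ^ k * (a * b div [:0, 1:] ^ k)) 0 = 0"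
    using k by (simp add: coeff_mult_0 coeff_0_power)
  then show ?thesis
    by (simp add: rk_mult_def minus_div_mult_eq_mod[symmetric] mult.commute coeff_mult_0)
qed

lemma rk_mult_const: "k \<ge> 1 \<Longrightarrow> rk_mult k [:a:] [:b:] = [:a * b:]"
  by (simp add: rk_mult_def mod_upow_eq_self)

lemma rk_mult_u_upow:
  "Suc w < k \<Longrightarrow> rk_mult k [:0, 1:] ([:0, 1:] ^ w) = ([:0, 1:] ^ Suc w :: 'a::field poly)"
  unfolding rk_mult_def power_Suc[symmetric] by (rule mod_upow_eq_self) simp

lemma rk_mult_upow:
  "w + v < k \<Longrightarrow> rk_mult k ([:0, 1:] ^ w) ([:0, 1:] ^ v) = ([:0, 1:] ^ (w + v) :: 'a::field poly)"
  unfolding rk_mult_def power_add[symmetric] by (rule mod_upow_eq_self) simp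

lemma rk_mult_upow_const:
  "w < k \<Longrightarrow> rk_mult k ([:0, 1:] ^ w) [:c:] = (monom c w :: 'a::field poly)"
  using degree_monom_le[of c w] by (simp add: rk_mult_def mod_upow_eq_self monom_altdef)

lemma upow_dvd_rk_mult:
  assumes "w + v \<le> k" "[:0, 1:] ^ w dvd (a :: 'a::field poly)" "[:0, 1:] ^ v dvd b"
  shows "[:0, 1:] ^ (w + v) dvd rk_mult k a b"
proof -
  have "a * b mod [:0, 1:] ^ k = a * b - [:0, 1:] ^ k * (a * b div [:0, 1:] ^ k)"
    by (simp add: minus_div_mult_eq_mod[symmetric] mult.commute)
  moreover have "[:0, 1:] ^ (w + v) dvd ([:0, 1:] ^ k :: 'a poly)"
    using assms(1) by (rule le_imp_power_dvd)
  moreover have "[:0, 1:] ^ (w + v) dvd a * b"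
    using assms(2,3) by (simp add: power_add mult_dvd_mono)
  ultimately show ?thesis unfolding rk_mult_def by (metis dvd_diff dvd_mult2)
qed

locale Rk_endo =
  fixes k :: nat and \<psi> :: "'a::field poly \<Rightarrow> 'a poly"
  assumes k1: "k \<ge> 1" and hom: "\<psi> \<in> ring_hom (Rk k) (Rk k)"
begin

lemma closed: "degree a < k \<Longrightarrow> degree (\<psi> a) < k"
  using ring_hom_closed[OF hom] by (simp add: Rk_carrier)

lemma mult: "degree a < k \<Longrightarrow> degree b < k \<Longrightarrow> \<psi> (rk_mult k a b) = rk_mult k (\<psi> a) (\<psi> b)"
  using ring_hom_mult[OF hom] by (simp add: Rk_carrier)

lemma upow_Suc:
  assumes "Suc w < k" shows "\<psi> ([:0, 1:] ^ Suc w) = rk_mult k (\<psi> [:0, 1:]) (\<psi> ([:0, 1:] ^ w))"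
proof -
  have "rk_mult k [:0, 1:] ([:0, 1:] ^ w) = ([:0, 1:] ^ Suc w :: 'a poly)"
    using assms by (rule rk_mult_u_upow)
  then have "\<psi> ([:0, 1:] ^ Suc w) = \<psi> (rk_mult k [:0, 1:] ([:0, 1:] ^ w))" by (simp only:)
  also have "\<dots> = rk_mult k (\<psi> [:0, 1:]) (\<psi> ([:0, 1:] ^ w))"
    using mult[of "[:0, 1:]" "[:0, 1:] ^ w"] assms by simp
  finally show ?thesis .
qed

lemma coeff_0_u:
  assumes k2: "k \<ge> 2" shows "coeff (\<psi> [:0, 1:]) 0 = 0"
proof -
  \<comment> \<open>u is nilpotent, hence so is the constant term of its image\<close>
  define c where "c = coeff (\<psi> [:0, 1:]) 0"
  have u: "degree ([:0, 1:] :: 'a poly) < k" using k2 by simp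
  have pow: "coeff (\<psi> ([:0, 1:] ^ w)) 0 = c ^ w" if "w < k" for w
    using that
  proof (induction w)
    case 0
    then show ?case using ring_hom_one[OF hom] by simp
  next
    case (Suc w)
    then show ?case using upow_Suc[of w] k1 by (simp add: coeff_0_rk_mult c_def)
  qed
  have "rk_mult k [:0, 1:] ([:0, 1:] ^ (k - 1)) = (0 :: 'a poly)"
    using k2 by (simp add: rk_mult_def power_Suc[symmetric])
  then have "0 = rk_mult k (\<psi> [:0, 1:]) (\<psi> ([:0, 1:] ^ (k - 1)))"
    using mult[OF u, of "[:0, 1:] ^ (k - 1)"] ring_hom_zero[OF hom ring_Rk[OF k1] ring_Rk[OF k1]] k2
    by simp
  moreover have "coeff (rk_mult k (\<psi> [:0, 1:]) (\<psi> ([:0, 1:] ^ (k - 1)))) 0 = c * c ^ (k - 1)"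
    using k1 by (simp add: c_def coeff_0_rk_mult pow)
  moreover have "c ^ k = c * c ^ (k - 1)" using k1 by (simp add: power_eq_if)
  ultimately have "c ^ k = 0" by simp
  then show ?thesis by (simp add: c_def)
qed

lemma upow_dvd_upow: "w < k \<Longrightarrow> [:0, 1:] ^ w dvd \<psi> ([:0, 1:] ^ w)"
proof (induction w)
  case (Suc w)
  then have k2: "k \<ge> 2" by simp
  have "\<psi> ([:0, 1:] ^ Suc w) = rk_mult k (\<psi> [:0, 1:]) (\<psi> ([:0, 1:] ^ w))"
    using Suc.prems by (rule upow_Suc)
  moreover have "[:0, 1:] ^ 1 dvd \<psi> [:0, 1:]"
    using coeff_0_u[OF k2] upow_dvd_iff[of 1 "\<psi> [:0, 1:]"] by simp
  ultimately show ?case using Suc upow_dvd_rk_mult[of 1 w k] by simp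
qed simp

lemma upow_dvd:
  assumes w: "w < k" and a: "degree a < k" and d: "[:0, 1:] ^ w dvd a"
  shows "[:0, 1:] ^ w dvd \<psi> a"
proof -
  obtain e where e: "a = [:0, 1:] ^ w * e" using d by blast
  have ek: "degree e < k"
    using a e k1 by (cases "e = 0") (simp_all add: degree_mult_eq)
  have "rk_mult k ([:0, 1:] ^ w) e = a" using e a by (simp add: rk_mult_def mod_upow_eq_self)
  then have "\<psi> a = rk_mult k (\<psi> ([:0, 1:] ^ w)) (\<psi> e)" using mult[of "[:0, 1:] ^ w" e] w ek by simp
  then show ?thesis using upow_dvd_rk_mult[of w 0 k] upow_dvd_upow[OF w] w by simp
qed

end

lemma Rk_iso_upow_twist:
  fixes \<psi> :: "'a::field poly \<Rightarrow> 'a poly"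
  assumes k1: "k \<ge> 1" and iso: "\<psi> \<in> ring_iso (Rk k) (Rk k)" and w: "w < k" and c: "degree c < k"
  shows "\<exists>b. degree b < k \<and> rk_mult k b (\<psi> ([:0, 1:] ^ w)) = rk_mult k ([:0, 1:] ^ w) c"
proof -
  \<comment> \<open>pull \<open>u\<^sup>w c\<close> back along \<open>\<psi>\<close>: the preimage is again a multiple of \<open>u\<^sup>w\<close>\<close>
  define \<psi>' where "\<psi>' = inv_into (carrier (Rk k)) \<psi>"
  interpret \<psi>: Rk_endo k \<psi> using k1 iso by unfold_locales (simp_all add: ring_iso_def)
  interpret \<psi>': Rk_endo k \<psi>'
    using k1 ring_iso_set_sym[OF ring_Rk[OF k1] iso] by unfold_locales (simp_all add: ring_iso_def \<psi>'_def)
  define y where "y = rk_mult k ([:0, 1:] ^ w) c"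
  have y: "degree y < k" "[:0, 1:] ^ w dvd y"
    using upow_dvd_rk_mult[of w 0 k "[:0, 1:] ^ w" c] w rk_mult_closed[OF k1] by (auto simp: y_def)
  then obtain e where e: "\<psi>' y = [:0, 1:] ^ w * e" using \<psi>'.upow_dvd[OF w] by (meson dvd_def)
  have dy: "degree (\<psi>' y) < k" using \<psi>'.closed y(1) .
  have ek: "degree e < k" using dy e k1 by (cases "e = 0") (simp_all add: degree_mult_eq)
  have "\<psi> (\<psi>' y) = y"
    using iso y(1) by (auto simp: \<psi>'_def ring_iso_def bij_betw_def Rk_carrier intro!: f_inv_into_f)
  moreover have "rk_mult k e ([:0, 1:] ^ w) = \<psi>' y"
    using e dy by (simp add: rk_mult_def mod_upow_eq_self mult.commute)
  ultimately have "rk_mult k (\<psi> e) (\<psi> ([:0, 1:] ^ w)) = y" using \<psi>.mult[of e "[:0, 1:] ^ w"] w ek by simp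
  then show ?thesis using \<psi>.closed[OF ek] by (auto simp: y_def)
qed

section \<open>Skew polynomials over R_k\<close>

locale skew_Rk =
  fixes k :: nat and \<Theta> :: "'a::field poly \<Rightarrow> 'a poly" and \<theta> :: "'a \<Rightarrow> 'a"
  assumes k1: "k \<ge> 1" and iso_\<Theta>: "\<Theta> \<in> ring_iso (Rk k) (Rk k)"
    and \<Theta>_const: "\<And>c. \<Theta> [:c:] = [:\<theta> c:]"
begin

abbreviation S :: "'a poly poly ring" where "S \<equiv> skewRk k \<Theta>"

abbreviation skew_times_S :: "'a poly poly \<Rightarrow> 'a poly poly \<Rightarrow> 'a poly poly" (infixl "\<star>" 70) where
  "A \<star> B \<equiv> skew_mult (rk_mult k) \<Theta> A B"

lemma iso_\<Theta>_pow: "\<Theta> ^^ n \<in> ring_iso (Rk k) (Rk k)"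
proof (induction n)
  case 0
  show ?case using ring_iso_set_refl by (simp add: id_def)
next
  case (Suc n)
  then show ?case using ring_iso_set_trans[OF Suc iso_\<Theta>] by (simp add: o_def)
qed

lemma Rk_endo_\<Theta>_pow: "Rk_endo k (\<Theta> ^^ n)"
  using k1 iso_\<Theta>_pow[of n] by unfold_locales (simp_all add: ring_iso_def)

lemma \<Theta>_pow_const: "(\<Theta> ^^ n) [:c:] = [:(\<theta> ^^ n) c:]"
  by (induction n) (auto simp: \<Theta>_const)

lemma hom_\<theta>: "\<theta> \<in> ring_hom (ring_of UNIV (*)) (ring_of UNIV (*))"
proof (rule ring_hom_memI)
  interpret \<Theta>: Rk_endo k \<Theta> using Rk_endo_\<Theta>_pow[of 1] by simp
  fix a b :: 'a
  have "[:\<theta> (a * b):] = [:\<theta> a * \<theta> b:]"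
    using \<Theta>.mult[of "[:a:]" "[:b:]"] k1 by (simp add: \<Theta>_const rk_mult_const)
  then show "\<theta> (a \<otimes>\<^bsub>ring_of UNIV (*)\<^esub> b) = \<theta> a \<otimes>\<^bsub>ring_of UNIV (*)\<^esub> \<theta> b" by simp
  have "[:\<theta> (a + b):] = [:\<theta> a + \<theta> b:]"
    using ring_hom_add[OF \<Theta>.hom, of "[:a:]" "[:b:]"] k1 by (simp add: \<Theta>_const Rk_carrier)
  then show "\<theta> (a \<oplus>\<^bsub>ring_of UNIV (*)\<^esub> b) = \<theta> a \<oplus>\<^bsub>ring_of UNIV (*)\<^esub> \<theta> b" by simp
  show "\<theta> \<one>\<^bsub>ring_of UNIV (*)\<^esub> = \<one>\<^bsub>ring_of UNIV (*)\<^esub>"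
    using \<Theta>_const[of 1] ring_hom_one[OF \<Theta>.hom] by (simp add: one_pCons)
qed simp

sublocale RX: skew_poly "carrier (Rk k)" "rk_mult k" \<Theta>
proof -
  have Rk: "ring_of (carrier (Rk k)) (rk_mult k) = Rk k" by (simp add: Rk_def)
  show "skew_poly (carrier (Rk k)) (rk_mult k) \<Theta>"
    using ring_Rk[OF k1] iso_\<Theta> by (intro skew_poly.intro) (simp_all only: Rk ring_iso_def mem_Collect_eq)
qed

sublocale FX: skew_field_poly \<theta>
  by (simp add: skew_field_poly_def skew_poly_def ring_of_comm_ring hom_\<theta>)

lemma polys_iff: "A \<in> RX.polys \<longleftrightarrow> (\<forall>n. degree (coeff A n) < k)"
  unfolding RX.polys_def by (simp add: Rk_carrier)

lemma carrier_S: "carrier S = RX.polys" unfolding RX.polys_def by (simp add: skewRk_def)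
lemma mult_S: "mult S = (\<star>)" by (simp add: skewRk_def)
lemma add_S: "add S = (+)" by (simp add: skewRk_def)
lemma zero_S: "zero S = 0" by (simp add: skewRk_def)
lemma one_S: "one S = 1" by (simp add: skewRk_def)

lemma ring_S: "ring S"
  using RX.ring_skew unfolding skewRk_def RX.polys_def by simp

lemma a_inv_S: "X \<in> carrier S \<Longrightarrow> \<ominus>\<^bsub>S\<^esub> X = - X"
  using abelian_group.minus_equality[OF ring.is_abelian_group[OF ring_S], of "- X" X]
  by (simp add: carrier_S add_S zero_S RX.polys_uminus)

lemma finsum_S: "f \<in> A \<rightarrow> carrier S \<Longrightarrow> finsum S f A = (\<Sum>i\<in>A. f i)"
proof -
  interpret R: ring S by (rule ring_S)
  show "f \<in> A \<rightarrow> carrier S \<Longrightarrow> finsum S f A = (\<Sum>i\<in>A. f i)"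
    by (induction A rule: infinite_finite_induct) (simp_all add: R.finsum_insert add_S zero_S)
qed

lemma coeff_emb: "coeff (emb p) n = [:coeff p n:]"
  by (simp add: emb_def coeff_map_poly)

lemma emb_polys: "emb p \<in> RX.polys"
  using k1 by (simp add: polys_iff coeff_emb)

lemma emb_diff: "emb (p - q) = emb p - emb q"
  by (rule poly_eqI) (simp add: coeff_emb)

lemma emb_mult: "emb (p \<diamond> q) = emb p \<star> emb q"
proof (rule poly_eqI)
  fix n
  have "coeff (emb p \<star> emb q) n = (\<Sum>i\<le>n. [:coeff p i * (\<theta> ^^ i) (coeff q (n - i)):])"
    using k1 by (simp add: RX.coeff_skew_mult emb_polys coeff_emb \<Theta>_pow_const rk_mult_const)
  also have "\<dots> = [:coeff (p \<diamond> q) n:]"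
    by (simp add: FX.coeff_skew_mult sum_to_poly)
  finally show "coeff (emb (p \<diamond> q)) n = coeff (emb p \<star> emb q) n" by (simp add: coeff_emb)
qed

lemma coeff_mu: "coeff (mu A) n = coeff (coeff A n) 0"
  by (simp add: mu_def coeff_map_poly)

lemma skew_pow_monic:
  assumes f: "f \<in> carrier S" and lf: "lead_coeff f = 1"
  shows "f [^]\<^bsub>S\<^esub> n \<in> carrier S \<and> lead_coeff (f [^]\<^bsub>S\<^esub> n) = 1 \<and> degree (f [^]\<^bsub>S\<^esub> n) = n * degree f"
proof (induction n)
  case 0
  show ?case using RX.polys_one by (simp add: carrier_S one_S)
next
  case (Suc n)
  then have IH: "f [^]\<^bsub>S\<^esub> n \<in> RX.polys" "lead_coeff (f [^]\<^bsub>S\<^esub> n) = 1"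
      "degree (f [^]\<^bsub>S\<^esub> n) = n * degree f"
    by (auto simp: carrier_S)
  have "f [^]\<^bsub>S\<^esub> Suc n = f [^]\<^bsub>S\<^esub> n \<star> f" by (simp add: mult_S)
  moreover have "rk_mult k (lead_coeff (f [^]\<^bsub>S\<^esub> n)) ((\<Theta> ^^ degree (f [^]\<^bsub>S\<^esub> n)) (lead_coeff f)) = 1"
    using IH(2) lf k1 RX.\<sigma>_pow_one by (simp add: rk_mult_one)
  ultimately show ?case
    using RX.degree_skew_mult[of "f [^]\<^bsub>S\<^esub> n" f] IH f RX.skew_mult_closed
    by (simp add: carrier_S)
qed

lemma skew_irreducible_degree_pos:
  assumes "lead_coeff f = 1" and "skew_irreducible S f"
  shows "0 < degree f"
proof (rule ccontr)
  assume "\<not> 0 < degree f"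
  then have "f = 1" using assms(1) by (metis degree_0_id gr0I one_pCons)
  moreover have "\<one>\<^bsub>S\<^esub> \<in> Units S" using monoid.Units_one_closed ring.axioms(2)[OF ring_S] by blast
  ultimately show False using assms(2) by (simp add: skew_irreducible_def one_S)
qed

definition u_pow :: "nat \<Rightarrow> 'a poly poly" where "u_pow w = [:[:0, 1:] ^ w:]"

definition uideal :: "nat \<Rightarrow> 'a poly poly set" where
  "uideal w = {A \<in> RX.polys. \<forall>n. [:0, 1:] ^ w dvd coeff A n}"

lemma uideal_polys: "A \<in> uideal w \<Longrightarrow> A \<in> RX.polys" by (simp add: uideal_def)
lemma uideal_0: "uideal 0 = RX.polys" by (auto simp: uideal_def)
lemma uideal_zero: "0 \<in> uideal w" by (simp add: uideal_def RX.polys_zero)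
lemma uideal_antimono: "w \<le> v \<Longrightarrow> uideal v \<subseteq> uideal w"
  by (auto simp: uideal_def intro: dvd_trans[OF le_imp_power_dvd])
lemma uideal_add: "A \<in> uideal w \<Longrightarrow> B \<in> uideal w \<Longrightarrow> A + B \<in> uideal w"
  by (simp add: uideal_def RX.polys_add)
lemma uideal_diff: "A \<in> uideal w \<Longrightarrow> B \<in> uideal w \<Longrightarrow> A - B \<in> uideal w"
  by (simp add: uideal_def RX.polys_diff)
lemma uideal_sum: "(\<And>t. t \<in> T \<Longrightarrow> f t \<in> uideal w) \<Longrightarrow> (\<Sum>t\<in>T. f t) \<in> uideal w"
  by (induction T rule: infinite_finite_induct) (auto simp: uideal_zero uideal_add)

lemma uideal_k: "uideal k = {0}"
proof -
  have "c = 0" if "degree c < k" "[:0, 1:] ^ k dvd c" for c :: "'a poly"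
  proof (rule ccontr)
    assume "c \<noteq> 0"
    then have "k \<le> degree c" using dvd_imp_degree_le[OF that(2)] by simp
    then show False using that(1) by simp
  qed
  then have "A = 0" if "A \<in> uideal k" for A
    using that by (auto simp: uideal_def polys_iff poly_eq_iff)
  then show ?thesis using uideal_zero by blast
qed

lemma uideal_mult_left:
  assumes B: "B \<in> RX.polys" and A: "A \<in> uideal w"
  shows "B \<star> A \<in> uideal w"
proof (cases "w < k")
  case True
  interpret \<Theta>n: Rk_endo k "\<Theta> ^^ n" for n by (rule Rk_endo_\<Theta>_pow)
  have "[:0, 1:] ^ (0 + w) dvd rk_mult k (coeff B i) ((\<Theta> ^^ i) (coeff A (n - i)))" for i n
    using A B True by (intro upow_dvd_rk_mult \<Theta>n.upow_dvd) (auto simp: uideal_def polys_iff)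
  then show ?thesis
    using A B by (simp add: uideal_def RX.skew_mult_closed RX.coeff_skew_mult dvd_sum)
next
  case False
  then have "A = 0" using A uideal_antimono[of k w] uideal_k by auto
  then show ?thesis using B by (simp add: RX.skew_mult_zero_right uideal_zero)
qed

lemma u_pow_polys: "w < k \<Longrightarrow> u_pow w \<in> RX.polys"
  unfolding u_pow_def by (rule RX.polys_const) (simp add: Rk_carrier)

lemma coeff_u_pow_mult:
  "w < k \<Longrightarrow> A \<in> RX.polys \<Longrightarrow> coeff (u_pow w \<star> A) n = rk_mult k ([:0, 1:] ^ w) (coeff A n)"
  unfolding u_pow_def by (rule RX.coeff_skew_mult_const_left) (simp add: Rk_carrier)

lemma u_pow_mult_uideal:
  assumes w: "w < k" and wv: "w + v \<le> k" and A: "A \<in> uideal v"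
  shows "u_pow w \<star> A \<in> uideal (w + v)"
proof -
  have "[:0, 1:] ^ v dvd coeff A n" for n using A by (simp add: uideal_def)
  then have "[:0, 1:] ^ (w + v) dvd coeff (u_pow w \<star> A) n" for n
    using A w wv upow_dvd_rk_mult[of w v k "[:0, 1:] ^ w" "coeff A n"]
    by (simp add: coeff_u_pow_mult uideal_polys)
  then show ?thesis using A w by (simp add: uideal_def RX.skew_mult_closed u_pow_polys)
qed

lemma u_pow_mult_polys: "w < k \<Longrightarrow> A \<in> RX.polys \<Longrightarrow> u_pow w \<star> A \<in> uideal w"
  using u_pow_mult_uideal[of w 0 A] by (simp add: uideal_0)

lemma u_pow_mult_u_pow: "w + v < k \<Longrightarrow> u_pow w \<star> u_pow v = u_pow (w + v)"
proof (rule poly_eqI)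
  fix n
  assume wv: "w + v < k"
  have "coeff (u_pow w \<star> u_pow v) n = rk_mult k ([:0, 1:] ^ w) (coeff (u_pow v) n)"
    using wv by (intro coeff_u_pow_mult u_pow_polys) auto
  also have "\<dots> = coeff (u_pow (w + v)) n"
  proof (cases n)
    case 0
    then show ?thesis using wv by (simp add: u_pow_def rk_mult_upow)
  next
    case (Suc m)
    then show ?thesis by (simp add: u_pow_def rk_mult_def)
  qed
  finally show "coeff (u_pow w \<star> u_pow v) n = coeff (u_pow (w + v)) n" .
qed

lemma uideal_decomp:
  assumes A: "A \<in> uideal w" and w: "w < k"
  shows "A - u_pow w \<star> emb (map_poly (\<lambda>c. coeff c w) A) \<in> uideal (w + 1)"
proof -
  define z where "z = map_poly (\<lambda>c. coeff c w) A"
  have "coeff (u_pow w \<star> emb z) n = monom (coeff (coeff A n) w) w" for n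
    using w by (simp add: coeff_u_pow_mult emb_polys coeff_emb rk_mult_upow_const z_def coeff_map_poly)
  moreover have "coeff (coeff A n) i = 0" if "i < w" for n i
    using A that by (auto simp: uideal_def upow_dvd_iff)
  ultimately have "[:0, 1:] ^ (w + 1) dvd coeff (A - u_pow w \<star> emb z) n" for n
    unfolding upow_dvd_iff by (auto simp: coeff_monom)
  then show ?thesis
    using A w by (simp add: uideal_def z_def RX.polys_diff RX.skew_mult_closed u_pow_polys emb_polys)
qed

lemma sub_emb_mu_uideal:
  assumes "A \<in> RX.polys" shows "A - emb (mu A) \<in> uideal 1"
proof -
  have "[:0, 1:] ^ 1 dvd coeff (A - emb (mu A)) n" for n
    unfolding upow_dvd_iff by (simp add: coeff_emb coeff_mu)
  then show ?thesis using assms by (simp add: uideal_def RX.polys_diff emb_polys)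
qed

lemma u_pow_twist:
  assumes w: "w < k"
  shows "\<exists>B \<in> RX.polys. B \<star> u_pow w = u_pow w \<star> emb q"
proof -
  \<comment> \<open>as \<open>x\<^sup>n u\<^sup>w = \<Theta>\<^sup>n(u\<^sup>w) x\<^sup>n\<close>, each coefficient of \<open>q\<close> can be moved past \<open>u\<^sup>w\<close> separately\<close>
  have "\<forall>n. \<exists>b. degree b < k \<and>
      rk_mult k b ((\<Theta> ^^ n) ([:0, 1:] ^ w)) = rk_mult k ([:0, 1:] ^ w) [:coeff q n:]"
    using Rk_iso_upow_twist[OF k1 iso_\<Theta>_pow w] k1 by simp
  then obtain b where b: "\<And>n. degree (b n) < k"
    "\<And>n. rk_mult k (b n) ((\<Theta> ^^ n) ([:0, 1:] ^ w)) = rk_mult k ([:0, 1:] ^ w) [:coeff q n:]"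
    by metis
  define B where "B = (\<Sum>n\<le>degree q. monom (b n) n)"
  have cB: "coeff B n = (if n \<le> degree q then b n else 0)" for n
    by (simp add: B_def coeff_sum coeff_monom sum.delta')
  have B: "B \<in> RX.polys" using b k1 by (simp add: polys_iff cB)
  have "B \<star> u_pow w = u_pow w \<star> emb q"
  proof (rule poly_eqI)
    fix n
    have "coeff (B \<star> u_pow w) n = rk_mult k (coeff B n) ((\<Theta> ^^ n) ([:0, 1:] ^ w))"
      unfolding u_pow_def using B w by (intro RX.coeff_skew_mult_const_right) (simp_all add: Rk_carrier)
    also have "\<dots> = coeff (u_pow w \<star> emb q) n"
      using w b by (auto simp: cB coeff_u_pow_mult emb_polys coeff_emb rk_mult_def coeff_eq_0)
    finally show "coeff (B \<star> u_pow w) n = coeff (u_pow w \<star> emb q) n" .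
  qed
  then show ?thesis using B by blast
qed

end

section \<open>Left ideals of R_k[x;\<Theta>] modulo a monic polynomial\<close>

locale skew_Rk_quotient = skew_Rk +
  fixes F :: "'a poly poly" and I :: "'a poly poly set set"
  assumes F_carrier: "F \<in> carrier S" and F_monic: "lead_coeff F = 1" and F_degree: "0 < degree F"
    and I_left_ideal: "left_ideal I (S Quot Idl\<^bsub>S\<^esub> {F})"
begin

abbreviation J :: "'a poly poly set" where "J \<equiv> Idl\<^bsub>S\<^esub> {F}"

abbreviation Q :: "'a poly poly set ring" where "Q \<equiv> S Quot J"

lemma ideal_J: "ideal J S"
  using ring.genideal_ideal[OF ring_S] F_carrier by simp

lemma ring_hom_ring_Q: "ring_hom_ring S Q ((+>\<^bsub>S\<^esub>) J)"
  using ideal.rcos_ring_hom_ring[OF ideal_J] .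

lemma carrier_Q: "(+>\<^bsub>S\<^esub>) J ` carrier S = carrier Q"
  by (auto simp: FactRing_def A_RCOSETS_def RCOSETS_def a_r_coset_def)

definition Ilift :: "'a poly poly set" where "Ilift = {X \<in> carrier S. J +>\<^bsub>S\<^esub> X \<in> I}"

lemma left_ideal_Ilift: "left_ideal Ilift S"
  unfolding Ilift_def
  by (rule ring_hom_ring.left_ideal_vimage[OF ring_hom_ring_Q I_left_ideal])

lemma Ilift_add: "X \<in> Ilift \<Longrightarrow> Y \<in> Ilift \<Longrightarrow> X + Y \<in> Ilift"
  using left_ideal_Ilift additive_subgroup.a_closed by (fastforce simp: left_ideal_def add_S)

lemma Ilift_diff: "X \<in> Ilift \<Longrightarrow> Y \<in> Ilift \<Longrightarrow> X - Y \<in> Ilift"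
  using Ilift_add[of X "- Y"] left_ideal_Ilift additive_subgroup.a_inv_closed[of Ilift S Y]
  by (simp add: left_ideal_def a_inv_S Ilift_def)

lemma Ilift_mult_left: "B \<in> RX.polys \<Longrightarrow> X \<in> Ilift \<Longrightarrow> B \<star> X \<in> Ilift"
  using left_ideal_Ilift by (simp add: left_ideal_def carrier_S mult_S)

lemma J_subset_Ilift: "J \<subseteq> Ilift"
proof
  fix X assume X: "X \<in> J"
  then have "J +>\<^bsub>S\<^esub> X = \<zero>\<^bsub>Q\<^esub>"
    using ring.a_rcos_zero[OF ring_S ideal_J] by (simp add: FactRing_def)
  moreover have "\<zero>\<^bsub>Q\<^esub> \<in> I"
    using I_left_ideal additive_subgroup.zero_closed by (fastforce simp: left_ideal_def)
  ultimately show "X \<in> Ilift" using X ideal.Icarr[OF ideal_J] by (simp add: Ilift_def)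
qed

lemma F_Ilift: "F \<in> Ilift"
  using ring.genideal_self'[OF ring_S F_carrier] J_subset_Ilift by blast

definition tor :: "nat \<Rightarrow> 'a poly set" where
  "tor w = {z. \<exists>R \<in> uideal (w + 1). u_pow w \<star> emb z + R \<in> Ilift}"

lemma tor_diff:
  assumes w: "w < k" and z: "z1 \<in> tor w" "z2 \<in> tor w"
  shows "z1 - z2 \<in> tor w"
proof -
  obtain R1 R2 where R: "R1 \<in> uideal (w + 1)" "R2 \<in> uideal (w + 1)"
    "u_pow w \<star> emb z1 + R1 \<in> Ilift" "u_pow w \<star> emb z2 + R2 \<in> Ilift"
    using z by (auto simp: tor_def)
  have eq: "(u_pow w \<star> emb z1 + R1) - (u_pow w \<star> emb z2 + R2) = u_pow w \<star> emb (z1 - z2) + (R1 - R2)"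
    using w by (simp add: emb_diff RX.skew_mult_diff_right emb_polys u_pow_polys)
  have "u_pow w \<star> emb (z1 - z2) + (R1 - R2) \<in> Ilift"
    using Ilift_diff[OF R(3,4)] by (simp only: eq)
  then show ?thesis using uideal_diff[OF R(1,2)] by (auto simp: tor_def)
qed

lemma tor_mult_left:
  assumes w: "w < k" and z: "z \<in> tor w"
  shows "p \<diamond> z \<in> tor w"
proof -
  obtain R where R: "R \<in> uideal (w + 1)" "u_pow w \<star> emb z + R \<in> Ilift" using z by (auto simp: tor_def)
  obtain B where B: "B \<in> RX.polys" "B \<star> u_pow w = u_pow w \<star> emb p" using u_pow_twist[OF w] by blast
  have "B \<star> (u_pow w \<star> emb z) = (B \<star> u_pow w) \<star> emb z"
    by (rule RX.skew_mult_assoc[symmetric]) (use B w in \<open>simp_all add: u_pow_polys emb_polys\<close>)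
  also have "\<dots> = (u_pow w \<star> emb p) \<star> emb z" using B by simp
  also have "\<dots> = u_pow w \<star> emb (p \<diamond> z)"
    using B w by (simp add: RX.skew_mult_assoc u_pow_polys emb_polys emb_mult)
  finally have "B \<star> (u_pow w \<star> emb z + R) = u_pow w \<star> emb (p \<diamond> z) + B \<star> R"
    using B R w by (simp add: RX.skew_mult_distrib_right RX.skew_mult_closed u_pow_polys emb_polys
        uideal_polys)
  then show ?thesis
    using Ilift_mult_left[OF B(1) R(2)] uideal_mult_left[OF B(1) R(1)] by (auto simp: tor_def)
qed

lemma mu_F_tor: assumes w: "w < k" shows "mu F \<in> tor w"
proof -
  have F: "F \<in> RX.polys" using F_carrier by (simp add: carrier_S)
  have "u_pow w \<star> F = u_pow w \<star> emb (mu F) + u_pow w \<star> (F - emb (mu F))"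
    using w F by (simp add: RX.skew_mult_diff_right u_pow_polys emb_polys)
  moreover have "u_pow w \<star> (F - emb (mu F)) \<in> uideal (w + 1)"
    using w sub_emb_mu_uideal[OF F] by (intro u_pow_mult_uideal) auto
  moreover have "u_pow w \<star> F \<in> Ilift" using w F_Ilift by (intro Ilift_mult_left u_pow_polys)
  ultimately show ?thesis by (auto simp: tor_def)
qed

lemma mu_F_monic: "lead_coeff (mu F) = 1" and degree_mu_F: "degree (mu F) = degree F"
proof -
  have "coeff (mu F) (degree F) = 1" using F_monic by (simp add: coeff_mu)
  moreover have "coeff (mu F) n = 0" if "n > degree F" for n
    using that by (simp add: coeff_mu coeff_eq_0)
  ultimately show "degree (mu F) = degree F" by (metis le_antisym le_degree leI one_neq_zero degree_le)
  then show "lead_coeff (mu F) = 1" using \<open>coeff (mu F) (degree F) = 1\<close> by simp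
qed

lemma tor_Suc:
  assumes w: "w + 1 < k" and z: "z \<in> tor w"
  shows "z \<in> tor (w + 1)"
proof -
  obtain R where R: "R \<in> uideal (w + 1)" "u_pow w \<star> emb z + R \<in> Ilift" using z by (auto simp: tor_def)
  have "u_pow 1 \<star> (u_pow w \<star> emb z + R) = u_pow (w + 1) \<star> emb z + u_pow 1 \<star> R"
    using w R(1) u_pow_mult_u_pow[of 1 w]
    by (simp add: RX.skew_mult_distrib_right RX.skew_mult_assoc[symmetric] RX.skew_mult_closed
        u_pow_polys emb_polys uideal_polys)
  moreover have "u_pow 1 \<star> R \<in> uideal (w + 1 + 1)"
    using u_pow_mult_uideal[OF _ _ R(1), of 1] w by (simp add: add.commute)
  moreover have "u_pow 1 \<star> (u_pow w \<star> emb z + R) \<in> Ilift"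
    using Ilift_mult_left[OF u_pow_polys R(2)] w by simp
  ultimately show ?thesis by (auto simp: tor_def)
qed

lemma tor_mono: "w \<le> v \<Longrightarrow> v < k \<Longrightarrow> tor w \<subseteq> tor v"
proof (induction v rule: dec_induct)
  case (step v)
  then show ?case using tor_Suc[of v] by auto
qed simp

definition tor_gen :: "nat \<Rightarrow> 'a poly" where
  "tor_gen w = (SOME a. lead_coeff a = 1 \<and> a \<in> tor w \<and> (\<forall>b\<in>tor w. \<exists>q. b = q \<diamond> a))"

lemma tor_gen:
  assumes w: "w < k"
  shows "lead_coeff (tor_gen w) = 1" "tor_gen w \<in> tor w" "\<And>b. b \<in> tor w \<Longrightarrow> \<exists>q. b = q \<diamond> tor_gen w"
proof -
  have "\<exists>a. lead_coeff a = 1 \<and> a \<in> tor w \<and> (\<forall>b\<in>tor w. \<exists>q. b = q \<diamond> a)"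
    using w tor_diff tor_mult_left mu_F_tor mu_F_monic
    by (intro FX.left_ideal_monic_generator[of "tor w" "mu F"]) auto
  then have "lead_coeff (tor_gen w) = 1 \<and> tor_gen w \<in> tor w \<and> (\<forall>b\<in>tor w. \<exists>q. b = q \<diamond> tor_gen w)"
    unfolding tor_gen_def by (rule someI_ex)
  then show "lead_coeff (tor_gen w) = 1" "tor_gen w \<in> tor w" "\<And>b. b \<in> tor w \<Longrightarrow> \<exists>q. b = q \<diamond> tor_gen w"
    by auto
qed

lemma degree_tor_gen_le: assumes w: "w < k" shows "degree (tor_gen w) \<le> degree F"
proof -
  obtain q where q: "mu F = q \<diamond> tor_gen w" using tor_gen(3)[OF w mu_F_tor[OF w]] by blast
  then have "q \<noteq> 0" using mu_F_monic by (auto simp: FX.skew_mult_zero_left)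
  then show ?thesis using q FX.degree_skew_mult_monic[OF tor_gen(1)[OF w]] degree_mu_F by force
qed

lemma tor_reduced_eq_0:
  assumes w: "w < k" and d: "d \<in> tor w" and reduced: "d = 0 \<or> degree d < degree (tor_gen w)"
  shows "d = 0"
proof (rule ccontr)
  assume nz: "d \<noteq> 0"
  obtain q where q: "d = q \<diamond> tor_gen w" using tor_gen(3)[OF w d] by blast
  then have "q \<noteq> 0" using nz by (auto simp: FX.skew_mult_zero_left)
  then have "degree d = degree q + degree (tor_gen w)"
    using q FX.degree_skew_mult_monic[OF tor_gen(1)[OF w]] by simp
  then show False using reduced nz by simp
qed

lemma uideal_reduce:
  assumes Z: "Z \<in> uideal m" and m: "m < k"
  obtains \<rho> Z' where "\<rho> = 0 \<or> degree \<rho> < degree (tor_gen m)" "Z' \<in> uideal (m + 1)"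
    "Z - u_pow m \<star> emb \<rho> - Z' \<in> Ilift"
proof -
  define z where "z = map_poly (\<lambda>c. coeff c m) Z"
  have Z0: "Z - u_pow m \<star> emb z \<in> uideal (m + 1)" unfolding z_def by (rule uideal_decomp[OF Z m])
  obtain q \<rho> where q\<rho>: "z = q \<diamond> tor_gen m + \<rho>" "\<rho> = 0 \<or> degree \<rho> < degree (tor_gen m)"
    using FX.skew_right_division[OF tor_gen(1)[OF m]] by blast
  obtain W where W: "W \<in> uideal (m + 1)" "u_pow m \<star> emb (q \<diamond> tor_gen m) + W \<in> Ilift"
    using tor_mult_left[OF m tor_gen(2)[OF m]] by (auto simp: tor_def)
  have "q \<diamond> tor_gen m = z - \<rho>" using q\<rho>(1) by simp
  then have "u_pow m \<star> emb (q \<diamond> tor_gen m) = u_pow m \<star> emb z - u_pow m \<star> emb \<rho>"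
    using m by (simp add: emb_diff RX.skew_mult_diff_right emb_polys u_pow_polys)
  then have "Z - u_pow m \<star> emb \<rho> - ((Z - u_pow m \<star> emb z) - W) = u_pow m \<star> emb (q \<diamond> tor_gen m) + W"
    by (simp only:) (simp add: algebra_simps)
  then have "Z - u_pow m \<star> emb \<rho> - ((Z - u_pow m \<star> emb z) - W) \<in> Ilift"
    using W(2) by (simp only:)
  then show ?thesis using that q\<rho>(2) uideal_diff[OF Z0 W(1)] by blast
qed

definition a_gen :: "nat \<Rightarrow> 'a poly" where "a_gen i = tor_gen (i - 1)"

definition tail :: "nat \<Rightarrow> nat \<Rightarrow> (nat \<Rightarrow> 'a poly) \<Rightarrow> 'a poly poly" where
  "tail i m r = (\<Sum>t\<in>{1..m - i}. u_pow (i - 1 + t) \<star> emb (r t))"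

definition reduced_tail :: "nat \<Rightarrow> nat \<Rightarrow> (nat \<Rightarrow> 'a poly) \<Rightarrow> bool" where
  "reduced_tail i m r \<longleftrightarrow> (\<forall>t\<in>{1..m - i}. r t = 0 \<or> degree (r t) < degree (a_gen (i + t)))"

lemma gen_poly_eq: "gen_poly k \<Theta> a r i = u_pow (i - 1) \<star> emb (a i) + tail i k (r i)"
  by (simp add: gen_poly_def tail_def mult_S u_pow_def)

lemma tail_uideal:
  assumes "1 \<le> i" "m \<le> k" shows "tail i m r \<in> uideal i"
  unfolding tail_def
proof (rule uideal_sum)
  fix t assume t: "t \<in> {1..m - i}"
  then have "u_pow (i - 1 + t) \<star> emb (r t) \<in> uideal (i - 1 + t)"
    using assms by (intro u_pow_mult_polys emb_polys) auto
  moreover have "uideal (i - 1 + t) \<subseteq> uideal i" using t assms by (intro uideal_antimono) auto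
  ultimately show "u_pow (i - 1 + t) \<star> emb (r t) \<in> uideal i" by blast
qed

lemma gen_poly_polys: "1 \<le> i \<Longrightarrow> i \<le> k \<Longrightarrow> gen_poly k \<Theta> a r i \<in> RX.polys"
  using tail_uideal[of i k "r i"] uideal_polys
  by (auto simp: gen_poly_eq intro!: RX.polys_add RX.skew_mult_closed u_pow_polys emb_polys)

lemma tail_Suc:
  assumes "1 \<le> i" "i \<le> m"
  shows "tail i (Suc m) (r(Suc m - i := \<rho>)) = u_pow m \<star> emb \<rho> + tail i m r"
proof -
  have set: "{1..Suc m - i} = insert (Suc m - i) {1..m - i}" using assms by auto
  have "(\<Sum>t\<in>{1..m - i}. u_pow (i - 1 + t) \<star> emb ((r(Suc m - i := \<rho>)) t)) =
      (\<Sum>t\<in>{1..m - i}. u_pow (i - 1 + t) \<star> emb (r t))"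
    by (rule sum.cong) auto
  moreover have "i - 1 + (Suc m - i) = m" using assms by auto
  moreover have "Suc m - i \<notin> {1..m - i}" using assms by auto
  ultimately show ?thesis unfolding tail_def set by (simp add: sum.insert)
qed

lemma reduced_tail_approx:
  assumes i: "1 \<le> i" "i \<le> m" and m: "m \<le> k"
  shows "\<exists>r Z. Z \<in> uideal m \<and> u_pow (i - 1) \<star> emb (a_gen i) + tail i m r + Z \<in> Ilift \<and> reduced_tail i m r"
  using i(2) m
proof (induction m rule: dec_induct)
  case base
  have "a_gen i \<in> tor (i - 1)" using tor_gen(2)[of "i - 1"] base i by (simp add: a_gen_def)
  then obtain R where "R \<in> uideal i" "u_pow (i - 1) \<star> emb (a_gen i) + R \<in> Ilift"
    using i by (auto simp: tor_def)
  then show ?case by (intro exI[of _ "\<lambda>_. 0"] exI[of _ R]) (simp add: tail_def reduced_tail_def)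
next
  case (step m)
  then obtain r Z where rZ: "Z \<in> uideal m" "u_pow (i - 1) \<star> emb (a_gen i) + tail i m r + Z \<in> Ilift"
    "reduced_tail i m r" by auto
  obtain \<rho> Z' where \<rho>: "\<rho> = 0 \<or> degree \<rho> < degree (tor_gen m)" "Z' \<in> uideal (m + 1)"
    "Z - u_pow m \<star> emb \<rho> - Z' \<in> Ilift"
    using uideal_reduce[OF rZ(1)] step by auto
  define r' where "r' = r(Suc m - i := \<rho>)"
  have "tail i (Suc m) r' = u_pow m \<star> emb \<rho> + tail i m r"
    using i step by (simp add: r'_def tail_Suc)
  then have "u_pow (i - 1) \<star> emb (a_gen i) + tail i (Suc m) r' + Z' =
      (u_pow (i - 1) \<star> emb (a_gen i) + tail i m r + Z) - (Z - u_pow m \<star> emb \<rho> - Z')"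
    by (simp add: algebra_simps)
  then have "u_pow (i - 1) \<star> emb (a_gen i) + tail i (Suc m) r' + Z' \<in> Ilift"
    using Ilift_diff[OF rZ(2) \<rho>(3)] by (simp only:)
  moreover have "reduced_tail i (Suc m) r'"
    using rZ(3) \<rho>(1) step i by (auto simp: reduced_tail_def r'_def a_gen_def)
  ultimately show ?case using \<rho>(2) by auto
qed

definition tail_gen :: "nat \<Rightarrow> nat \<Rightarrow> 'a poly" where
  "tail_gen i = (SOME r. u_pow (i - 1) \<star> emb (a_gen i) + tail i k r \<in> Ilift \<and> reduced_tail i k r)"

lemma tail_gen:
  assumes "1 \<le> i" "i \<le> k"
  shows "gen_poly k \<Theta> a_gen tail_gen i \<in> Ilift" "reduced_tail i k (tail_gen i)"
proof -
  have "\<exists>r. u_pow (i - 1) \<star> emb (a_gen i) + tail i k r \<in> Ilift \<and> reduced_tail i k r"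
    using reduced_tail_approx[OF assms order.refl] uideal_k by auto
  then have "u_pow (i - 1) \<star> emb (a_gen i) + tail i k (tail_gen i) \<in> Ilift \<and> reduced_tail i k (tail_gen i)"
    unfolding tail_gen_def by (rule someI_ex)
  then show "gen_poly k \<Theta> a_gen tail_gen i \<in> Ilift" "reduced_tail i k (tail_gen i)"
    by (simp_all add: gen_poly_eq)
qed

lemma lead_term_cancel:
  assumes m: "m < k" and X: "X \<in> Ilift" "X \<in> uideal m"
  shows "\<exists>B \<in> RX.polys. X - B \<star> gen_poly k \<Theta> a_gen tail_gen (Suc m) \<in> uideal (Suc m)"
proof -
  define z where "z = map_poly (\<lambda>c. coeff c m) X"
  have X': "X - u_pow m \<star> emb z \<in> uideal (m + 1)" unfolding z_def by (rule uideal_decomp[OF X(2) m])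
  then have "z \<in> tor m" using X(1) unfolding tor_def by (intro CollectI bexI[of _ "X - u_pow m \<star> emb z"]) auto
  then obtain q where q: "z = q \<diamond> tor_gen m" using tor_gen(3)[OF m] by blast
  obtain B where B: "B \<in> RX.polys" "B \<star> u_pow m = u_pow m \<star> emb q" using u_pow_twist[OF m] by blast
  define T where "T = tail (Suc m) k (tail_gen (Suc m))"
  have T: "T \<in> uideal (Suc m)" unfolding T_def using m by (intro tail_uideal) auto
  have "B \<star> (u_pow m \<star> emb (tor_gen m)) = (B \<star> u_pow m) \<star> emb (tor_gen m)"
    by (rule RX.skew_mult_assoc[symmetric]) (use B m in \<open>simp_all add: u_pow_polys emb_polys\<close>)
  also have "\<dots> = u_pow m \<star> emb z"
    using B m by (simp add: RX.skew_mult_assoc u_pow_polys emb_polys emb_mult q)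
  finally have "B \<star> gen_poly k \<Theta> a_gen tail_gen (Suc m) = u_pow m \<star> emb z + B \<star> T"
    using B m T uideal_polys
    by (simp add: gen_poly_eq T_def a_gen_def RX.skew_mult_distrib_right RX.skew_mult_closed u_pow_polys
        emb_polys)
  then have "X - B \<star> gen_poly k \<Theta> a_gen tail_gen (Suc m) = (X - u_pow m \<star> emb z) - B \<star> T"
    by (simp add: algebra_simps)
  moreover have "(X - u_pow m \<star> emb z) - B \<star> T \<in> uideal (Suc m)"
    using uideal_diff[OF _ uideal_mult_left[OF B(1) T]] X' by simp
  ultimately have "X - B \<star> gen_poly k \<Theta> a_gen tail_gen (Suc m) \<in> uideal (Suc m)" by (simp only:)
  then show ?thesis using B(1) by blast
qed

lemma Ilift_spanned:
  assumes "m \<le> k" and "X \<in> Ilift" and "X \<in> uideal m"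
  shows "\<exists>C. (\<forall>i\<in>{1..k}. C i \<in> RX.polys) \<and> X = (\<Sum>i\<in>{1..k}. C i \<star> gen_poly k \<Theta> a_gen tail_gen i)"
  using assms
proof (induction "k - m" arbitrary: m X)
  case 0
  then have "X = 0" using uideal_k by auto
  then show ?case
    using gen_poly_polys by (intro exI[of _ "\<lambda>_. 0"]) (auto simp: RX.polys_zero RX.skew_mult_zero_left)
next
  case (Suc n)
  let ?g = "gen_poly k \<Theta> a_gen tail_gen"
  have m: "m < k" using Suc by simp
  obtain B where B: "B \<in> RX.polys" "X - B \<star> ?g (Suc m) \<in> uideal (Suc m)"
    using lead_term_cancel[OF m Suc.prems(2,3)] by blast
  have "X - B \<star> ?g (Suc m) \<in> Ilift"
    using Suc.prems(2) Ilift_mult_left[OF B(1) tail_gen(1)[of "Suc m"]] m by (intro Ilift_diff) auto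
  moreover have "n = k - Suc m" using Suc.hyps(2) by simp
  ultimately obtain C where C: "\<forall>i\<in>{1..k}. C i \<in> RX.polys" "X - B \<star> ?g (Suc m) = (\<Sum>i\<in>{1..k}. C i \<star> ?g i)"
    using Suc.hyps(1)[of "Suc m" "X - B \<star> ?g (Suc m)"] m B(2) by auto
  define C' where "C' i = C i + (if i = Suc m then B else 0)" for i
  have "X = (\<Sum>i\<in>{1..k}. C i \<star> ?g i) + (\<Sum>i\<in>{1..k}. if i = Suc m then B \<star> ?g i else 0)"
    using m C(2)[symmetric] by simp
  also have "\<dots> = (\<Sum>i\<in>{1..k}. C' i \<star> ?g i)"
    unfolding sum.distrib[symmetric] using C(1) B(1) gen_poly_polys
    by (intro sum.cong) (auto simp: C'_def RX.skew_mult_distrib_left RX.polys_zero RX.skew_mult_zero_left)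
  finally show ?case using C(1) B(1) by (intro exI[of _ C']) (auto simp: C'_def RX.polys_add RX.polys_zero)
qed

lemma reduced_combination_eq_0:
  assumes comb: "(\<Sum>s\<in>{1..n}. u_pow (w + s) \<star> emb (d s)) \<in> Ilift" and wn: "w + n < k"
    and reduced: "\<And>s. s \<in> {1..n} \<Longrightarrow> d s = 0 \<or> degree (d s) < degree (tor_gen (w + s))"
  shows "\<forall>s\<in>{1..n}. d s = 0"
proof -
  define f where "f s = u_pow (w + s) \<star> emb (d s)" for s
  have "\<forall>s\<in>{1..t}. d s = 0" if "t \<le> n" for t
    using that
  proof (induction t)
    case (Suc t)
    then have IH: "\<forall>s\<in>{1..t}. d s = 0" by simp
    have "(\<Sum>s\<in>{1..n}. f s) = (\<Sum>s\<in>{Suc t..n}. f s)"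
      using IH wn by (intro sum.mono_neutral_right) (auto simp: f_def emb_def RX.skew_mult_zero_right u_pow_polys)
    also have "\<dots> = f (Suc t) + (\<Sum>s\<in>{Suc (Suc t)..n}. f s)"
      using Suc.prems by (rule sum.atLeast_Suc_atMost)
    finally have split: "(\<Sum>s\<in>{1..n}. f s) = u_pow (w + Suc t) \<star> emb (d (Suc t)) + (\<Sum>s\<in>{Suc (Suc t)..n}. f s)"
      by (simp add: f_def)
    have "(\<Sum>s\<in>{Suc (Suc t)..n}. f s) \<in> uideal (w + Suc t + 1)"
    proof (rule uideal_sum)
      fix s assume s: "s \<in> {Suc (Suc t)..n}"
      then have "f s \<in> uideal (w + s)" using wn by (auto simp: f_def intro!: u_pow_mult_polys emb_polys)
      moreover have "uideal (w + s) \<subseteq> uideal (w + Suc t + 1)" using s by (intro uideal_antimono) auto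
      ultimately show "f s \<in> uideal (w + Suc t + 1)" by blast
    qed
    then have "d (Suc t) \<in> tor (w + Suc t)"
      using comb split unfolding tor_def f_def by auto
    then have "d (Suc t) = 0"
      using tor_reduced_eq_0[of "w + Suc t" "d (Suc t)"] reduced[of "Suc t"] Suc.prems wn by auto
    then show ?case using IH by (auto simp: le_Suc_eq)
  qed simp
  then show ?thesis by blast
qed

lemma tail_gen_unique:
  assumes i: "1 \<le> i" "i \<le> k" and r: "gen_poly k \<Theta> a_gen r i \<in> Ilift" "reduced_tail i k (r i)"
  shows "\<forall>t\<in>{1..k - i}. r i t = tail_gen i t"
proof -
  obtain w where w: "i = Suc w" using i by (cases i) auto
  define d where "d t = tail_gen i t - r i t" for t
  have "(\<Sum>t\<in>{1..k - i}. u_pow (w + t) \<star> emb (d t)) = tail i k (tail_gen i) - tail i k (r i)"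
    unfolding tail_def sum_subtractf[symmetric] using i w
    by (intro sum.cong) (auto simp: d_def emb_diff RX.skew_mult_diff_right u_pow_polys emb_polys)
  then have "(\<Sum>t\<in>{1..k - i}. u_pow (w + t) \<star> emb (d t)) \<in> Ilift"
    using Ilift_diff[OF tail_gen(1)[OF i] r(1)] by (simp add: gen_poly_eq)
  moreover have "d t = 0 \<or> degree (d t) < degree (tor_gen (w + t))" if "t \<in> {1..k - i}" for t
  proof -
    have "tail_gen i t = 0 \<or> degree (tail_gen i t) < degree (tor_gen (w + t))"
        "r i t = 0 \<or> degree (r i t) < degree (tor_gen (w + t))"
      using tail_gen(2)[OF i] r(2) that w by (auto simp: reduced_tail_def a_gen_def)
    then show ?thesis unfolding d_def by (rule zero_or_degree_less_diff)
  qed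
  ultimately show ?thesis using reduced_combination_eq_0[where n = "k - i" and w = w and d = d] i w by (auto simp: d_def)
qed

lemma I_eq_left_gen: "I = left_gen Q (\<lambda>i. J +>\<^bsub>S\<^esub> gen_poly k \<Theta> a_gen tail_gen i) {1..k}"
proof (rule ring_hom_ring.left_ideal_eq_left_gen[OF ring_hom_ring_Q carrier_Q I_left_ideal])
  let ?g = "gen_poly k \<Theta> a_gen tail_gen"
  show "?g i \<in> carrier S \<and> J +>\<^bsub>S\<^esub> ?g i \<in> I" if "i \<in> {1..k}" for i
    using tail_gen(1)[of i] that by (auto simp: Ilift_def)
  show "\<exists>c\<in>{1..k} \<rightarrow> carrier S. X = finsum S (\<lambda>i. c i \<otimes>\<^bsub>S\<^esub> ?g i) {1..k}"
    if "X \<in> carrier S" "J +>\<^bsub>S\<^esub> X \<in> I" for X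
  proof -
    have "X \<in> Ilift" "X \<in> uideal 0" using that by (simp_all add: Ilift_def uideal_0 carrier_S)
    then obtain C where C: "\<forall>i\<in>{1..k}. C i \<in> RX.polys" "X = (\<Sum>i\<in>{1..k}. C i \<star> ?g i)"
      using Ilift_spanned[of 0 X] by blast
    moreover have "finsum S (\<lambda>i. C i \<otimes>\<^bsub>S\<^esub> ?g i) {1..k} = (\<Sum>i\<in>{1..k}. C i \<star> ?g i)"
      using C(1) gen_poly_polys by (simp add: finsum_S mult_S carrier_S RX.skew_mult_closed)
    ultimately show ?thesis by (intro bexI[of _ C]) (auto simp: carrier_S)
  qed
qed simp

lemma left_gen_Ilift:
  assumes I: "I = left_gen Q (\<lambda>i. J +>\<^bsub>S\<^esub> G i) {1..k}"
    and G: "\<And>i. i \<in> {1..k} \<Longrightarrow> G i \<in> carrier S" and i: "i \<in> {1..k}"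
  shows "G i \<in> Ilift"
proof -
  interpret Q: ring Q by (rule ideal.quotient_is_ring[OF ideal_J])
  have "J +>\<^bsub>S\<^esub> G i' \<in> carrier Q" if "i' \<in> {1..k}" for i' using G[OF that] carrier_Q by blast
  then have "J +>\<^bsub>S\<^esub> G i \<in> I"
    using Q.left_gen_generator[of "{1..k}" "\<lambda>i. J +>\<^bsub>S\<^esub> G i" i] i I by auto
  then show ?thesis using G i by (simp add: Ilift_def)
qed

lemma rep_conds_gen:
  assumes lj: "l * j = degree F"
  shows "rep_conds k \<theta> F l j a_gen tail_gen"
  unfolding rep_conds_def
proof (intro conjI ballI impI)
  fix i assume i: "i \<in> {1..k}"
  then obtain q where "mu F = q \<diamond> a_gen i" using tor_gen(3)[OF _ mu_F_tor] by (force simp: a_gen_def)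
  then show "a_gen i = 0 \<or> lead_coeff (a_gen i) = 1 \<and> rdvd (skewF \<theta>) (a_gen i) (mu F)"
    using tor_gen(1)[of "i - 1"] i by (auto simp: a_gen_def rdvd_def skewF_def)
next
  fix i assume i: "i \<in> {1..k - 1}"
  then have "i - 1 < k" "i - 1 \<le> k - 1" "k - 1 < k" using k1 by auto
  then have "a_gen i \<in> tor (k - 1)" using tor_gen(2)[of "i - 1"] tor_mono[of "i - 1" "k - 1"]
    by (auto simp: a_gen_def)
  then obtain q where "a_gen i = q \<diamond> a_gen k" using tor_gen(3)[of "k - 1"] k1 by (auto simp: a_gen_def)
  then show "rdvd (skewF \<theta>) (a_gen k) (a_gen i)" by (auto simp: rdvd_def skewF_def)
next
  fix i t assume i: "i \<in> {1..k}" and t: "t \<in> {1..k - i}"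
  have "i + t - 1 < k" using i t by auto
  then have "degree (a_gen (i + t)) \<le> degree F" using degree_tor_gen_le by (simp add: a_gen_def)
  then show "degree (tail_gen i t) < l * j"
    using tail_gen(2)[of i] i t F_degree lj by (force simp: reduced_tail_def)
next
  fix i t assume i: "i \<in> {2..k}" and t: "t \<in> {1..i - 1}"
  then have "1 \<le> t" "t \<le> k" "i - t \<in> {1..k - t}" "t + (i - t) = i" by auto
  then show "tail_gen t (i - t) = 0 \<or> degree (tail_gen t (i - t)) < degree (a_gen i)"
    using tail_gen(2)[of t] unfolding reduced_tail_def by metis
qed

lemma rep_conds_reduced_tail:
  assumes r: "rep_conds k \<theta> F l j a_gen r" and i: "1 \<le> i" "i \<le> k"
  shows "reduced_tail i k (r i)"
  unfolding reduced_tail_def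
proof
  fix t assume t: "t \<in> {1..k - i}"
  then have "i + t - 1 < k" using i by auto
  then have "a_gen (i + t) \<noteq> 0" using tor_gen(1)[of "i + t - 1"] by (auto simp: a_gen_def)
  moreover have "i + t \<in> {2..k}" "i \<in> {1..i + t - 1}" "i + t - i = t" using i t by auto
  ultimately show "r i t = 0 \<or> degree (r i t) < degree (a_gen (i + t))"
    using r unfolding rep_conds_def by metis
qed

theorem left_ideal_structure:
  assumes "l * j = degree F"
  shows "\<exists>a r. rep_conds k \<theta> F l j a r \<and> I = left_gen Q (\<lambda>i. J +>\<^bsub>S\<^esub> gen_poly k \<Theta> a r i) {1..k} \<and>
    (\<forall>r'. rep_conds k \<theta> F l j a r' \<and> I = left_gen Q (\<lambda>i. J +>\<^bsub>S\<^esub> gen_poly k \<Theta> a r' i) {1..k}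
       \<longrightarrow> (\<forall>i\<in>{1..k}. \<forall>t\<in>{1..k - i}. r' i t = r i t))"
proof (intro exI[of _ a_gen] exI[of _ tail_gen] conjI allI impI rep_conds_gen[OF assms] I_eq_left_gen)
  fix r' assume r': "rep_conds k \<theta> F l j a_gen r' \<and>
    I = left_gen Q (\<lambda>i. J +>\<^bsub>S\<^esub> gen_poly k \<Theta> a_gen r' i) {1..k}"
  show "\<forall>i\<in>{1..k}. \<forall>t\<in>{1..k - i}. r' i t = tail_gen i t"
  proof
    fix i assume i: "i \<in> {1..k}"
    have "gen_poly k \<Theta> a_gen r' i \<in> Ilift"
      using r' i by (intro left_gen_Ilift) (auto simp: carrier_S gen_poly_polys)
    then show "\<forall>t\<in>{1..k - i}. r' i t = tail_gen i t"
      using i r' rep_conds_reduced_tail tail_gen_unique by auto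
  qed
qed

end


theorem theorem3p2:
  fixes p m k n s l j :: nat
    and \<Theta> :: "'a::{field, finite} poly \<Rightarrow> 'a poly"
    and \<theta> :: "'a \<Rightarrow> 'a"
    and lam :: "'a poly"
    and f :: "'a poly poly"
    and I :: "'a poly poly set set"
  assumes "prime p" and "odd p"
    and "m \<ge> 1" and "k \<ge> 1" and "n \<ge> 1" and "s \<ge> 1"
    and "coprime n p"
    and "card (UNIV :: 'a set) = p ^ m"
    and "\<Theta> \<in> ring_iso (Rk k) (Rk k)"
    and "\<forall>a \<in> carrier (Rk k). (\<Theta> ^^ (n * p ^ s)) a = a"
    and "\<forall>c. \<Theta> [:c:] = [:\<theta> c:]"
    and "lam \<in> Units (Rk k)" and "\<Theta> lam = lam"
    and "f \<in> carrier (skewRk k \<Theta>)" and "lead_coeff f = 1"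
    and "skew_irreducible (skewRk k \<Theta>) f"
    and "rdvd (skewRk k \<Theta>) f (monom 1 (n * p ^ s) - [:lam:])"
    and "degree f = l"
    and "j \<ge> 1"
    and "central (skewRk k \<Theta>) (f [^]\<^bsub>skewRk k \<Theta>\<^esub> j)"
    and "rdvd (skewRk k \<Theta>) (f [^]\<^bsub>skewRk k \<Theta>\<^esub> j) (monom 1 (n * p ^ s) - [:lam:])"
    and "left_ideal I (skewRk k \<Theta> Quot (Idl\<^bsub>skewRk k \<Theta>\<^esub> {f [^]\<^bsub>skewRk k \<Theta>\<^esub> j}))"
  shows "\<exists>a r.
    rep_conds k \<theta> (f [^]\<^bsub>skewRk k \<Theta>\<^esub> j) l j a r \<and>
    I = left_gen (skewRk k \<Theta> Quot (Idl\<^bsub>skewRk k \<Theta>\<^esub> {f [^]\<^bsub>skewRk k \<Theta>\<^esub> j}))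
          (\<lambda>i. (Idl\<^bsub>skewRk k \<Theta>\<^esub> {f [^]\<^bsub>skewRk k \<Theta>\<^esub> j}) +>\<^bsub>skewRk k \<Theta>\<^esub> gen_poly k \<Theta> a r i) {1..k} \<and>
    (\<forall>r'. rep_conds k \<theta> (f [^]\<^bsub>skewRk k \<Theta>\<^esub> j) l j a r' \<and>
          I = left_gen (skewRk k \<Theta> Quot (Idl\<^bsub>skewRk k \<Theta>\<^esub> {f [^]\<^bsub>skewRk k \<Theta>\<^esub> j}))
                (\<lambda>i. (Idl\<^bsub>skewRk k \<Theta>\<^esub> {f [^]\<^bsub>skewRk k \<Theta>\<^esub> j}) +>\<^bsub>skewRk k \<Theta>\<^esub> gen_poly k \<Theta> a r' i) {1..k}
       \<longrightarrow> (\<forall>i\<in>{1..k}. \<forall>t\<in>{1..k - i}. r' i t = r i t))"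
proof -
  interpret skew_Rk k \<Theta> \<theta> using assms(4,9,11) by unfold_locales auto
  have F: "f [^]\<^bsub>S\<^esub> j \<in> carrier S" "lead_coeff (f [^]\<^bsub>S\<^esub> j) = 1" "degree (f [^]\<^bsub>S\<^esub> j) = j * l"
    using skew_pow_monic[OF assms(14,15), of j] assms(18) by auto
  have "0 < l" using skew_irreducible_degree_pos[OF assms(15,16)] assms(18) by simp
  then interpret skew_Rk_quotient k \<Theta> \<theta> "f [^]\<^bsub>S\<^esub> j" I
    using F assms(4,9,11,19,22) by unfold_locales auto
  show ?thesis using left_ideal_structure[of l j] F(3) by (simp add: mult.commute)
qed

end
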